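(* Fix $M>0$ and $0<\theta_1<\theta_2<2s-1$. There exists a constant $c_2>0$ such that if $$\limsup_{n\to\infty}\sup_{\theta\in[\theta_1,\theta_2]}\Big\{\Delta_n(\theta)\Big(\frac{n}{\sqrt{\log\log n}}\Big)^{\frac{4s}{4s+\theta+1}}\Big\}\le c_2,$$ then $$\lim_{n\to\infty}\inf_{T\in\mathcal T_n}\Big[\mathbb E_{P_0}T+\sup_{\theta\in[\theta_1,\theta_2]}\beta(T;\Delta_n(\theta),\theta,M)\Big]=1,$$ where $\mathcal T_n$ is the collection of all measurable test functions $T:\mathcal X^n\to[0,1]$ of $X_1,\dots,X_n$.
   Context: Standing setup. $(\mathcal X,\mathcal B)$ is a measurable space and $P_0$ a known probability measure on it. $K$ is a symmetric, positive semidefinite, square-integrable kernel, degenerate under $P_0$, with Mercer decomposition $K(x,x')=\sum_{k\ge1}\lambda_k\varphi_k(x)\varphi_k(x')$, infinitely many eigenvalues $\lambda_1>\lambda_2>\cdots>0$, $\{\varphi_k\}$ an orthonormal basis of the $P_0$-mean-zero functions in $L_2(P_0)$, $0<\liminf_k k^{2s}\lambda_k\le\limsup_k k^{2s}\lambda_k<\infty$ for some $s>1/2$, and $\sup_k\|\varphi_k\|_\infty<\infty$. $\mathcal H(K)$ is the RKHS of $K$, $\|f\|_K^2=\sum_k\lambda_k^{-1}\langle f,\varphi_k\rangle_{L_2(P_0)}^2$. $\mathcal F(\theta;M)$ ($\theta>0$) is the set of $f\in L_2(P_0)$ such that for every $R>0$ there is $f_R\in\mathcal H(K)$ with $\|f_R\|_K\le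 R$ and $\|f-f_R\|_{L_2(P_0)}\le MR^{-1/\theta}$. $\mathcal P(\Delta,\theta,M)$ is the set of probability measures $P\ll P_0$ with $u=dP/dP_0-1\in\mathcal F(\theta;M)$ and $\|u\|^2_{L_2(P_0)}\ge\Delta$. Type II error: $\beta(T;\Delta,\theta,M)=\sup_{P\in\mathcal P(\Delta,\theta,M)}\mathbb E_P[1-T(X_1,\dots,X_n)]$ with $X_i$ i.i.d. $P$; $\mathbb E_{P_0}T$ is the type I error. *)

theory Defs
  imports "HOL-Probability.Probability"
begin

definition L2 :: "'a measure \<Rightarrow> ('a \<Rightarrow> real) set" where
  "L2 P0 = {f. f \<in> borel_measurable P0 \<and> integrable P0 (\<lambda>x. (f x)^2)}"

definition L2norm :: "'a measure \<Rightarrow> ('a \<Rightarrow> real) \<Rightarrow> real" where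
  "L2norm P0 f = sqrt (\<integral>x. (f x)^2 \<partial>P0)"

definition coef :: "'a measure \<Rightarrow> (nat \<Rightarrow> 'a \<Rightarrow> real) \<Rightarrow> ('a \<Rightarrow> real) \<Rightarrow> nat \<Rightarrow> real" where
  "coef P0 \<phi> f k = (\<integral>x. f x * \<phi> k x \<partial>P0)"

text \<open>Membership in the RKHS H(K) (as elements of L2(P0)): f lies in the closed span
  of the eigenfunctions (i.e. is P0-mean-zero) and has finite RKHS norm.\<close>
definition in_RKHS :: "'a measure \<Rightarrow> (nat \<Rightarrow> real) \<Rightarrow> (nat \<Rightarrow> 'a \<Rightarrow> real) \<Rightarrow> ('a \<Rightarrow> real) \<Rightarrow> bool" where
  "in_RKHS P0 lam \<phi> f \<longleftrightarrow> f \<in> L2 P0 \<and> (\<integral>x. f x \<partial>P0) = 0 \<and>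
      summable (\<lambda>k. (coef P0 \<phi> f k)^2 / lam k)"

definition RKHS_norm :: "'a measure \<Rightarrow> (nat \<Rightarrow> real) \<Rightarrow> (nat \<Rightarrow> 'a \<Rightarrow> real) \<Rightarrow> ('a \<Rightarrow> real) \<Rightarrow> real" where
  "RKHS_norm P0 lam \<phi> f = sqrt (\<Sum>k. (coef P0 \<phi> f k)^2 / lam k)"

definition Fclass :: "'a measure \<Rightarrow> (nat \<Rightarrow> real) \<Rightarrow> (nat \<Rightarrow> 'a \<Rightarrow> real) \<Rightarrow> real \<Rightarrow> real \<Rightarrow> ('a \<Rightarrow> real) set" where
  "Fclass P0 lam \<phi> \<theta> Mc = {f \<in> L2 P0. \<forall>R>0. \<exists>fR. in_RKHS P0 lam \<phi> fR \<and>
       RKHS_norm P0 lam \<phi> fR \<le> R \<and> L2norm P0 (\<lambda>x. f x - fR x) \<le> Mc * R powr (-1/\<theta>)}"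

definition density_dev :: "'a measure \<Rightarrow> 'a measure \<Rightarrow> 'a \<Rightarrow> real" where
  "density_dev P0 P = (\<lambda>x. enn2real (RN_deriv P0 P x) - 1)"

definition Palt :: "'a measure \<Rightarrow> (nat \<Rightarrow> real) \<Rightarrow> (nat \<Rightarrow> 'a \<Rightarrow> real) \<Rightarrow> real \<Rightarrow> real \<Rightarrow> real \<Rightarrow> 'a measure set" where
  "Palt P0 lam \<phi> \<Delta> \<theta> Mc = {P. sets P = sets P0 \<and> prob_space P \<and> absolutely_continuous P0 P \<and>
       density_dev P0 P \<in> Fclass P0 lam \<phi> \<theta> Mc \<and> (L2norm P0 (density_dev P0 P))^2 \<ge> \<Delta>}"

definition tests :: "'a measure \<Rightarrow> nat \<Rightarrow> ((nat \<Rightarrow> 'a) \<Rightarrow> real) set" where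
  "tests P0 n = {T. T \<in> borel_measurable (PiM {..<n} (\<lambda>_. P0)) \<and>
       (\<forall>x\<in>space (PiM {..<n} (\<lambda>_. P0)). 0 \<le> T x \<and> T x \<le> 1)}"

text \<open>Type II error; the supremum over an empty alternative class is taken to be 0.\<close>
definition type2 :: "'a measure \<Rightarrow> (nat \<Rightarrow> real) \<Rightarrow> (nat \<Rightarrow> 'a \<Rightarrow> real) \<Rightarrow> nat \<Rightarrow>
     ((nat \<Rightarrow> 'a) \<Rightarrow> real) \<Rightarrow> real \<Rightarrow> real \<Rightarrow> real \<Rightarrow> real" where
  "type2 P0 lam \<phi> n T \<Delta> \<theta> Mc = Sup (insert 0
      ((\<lambda>P. \<integral>x. 1 - T x \<partial>(PiM {..<n} (\<lambda>_. P))) ` Palt P0 lam \<phi> \<Delta> \<theta> Mc))"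

end

theory Submission
  imports Defs "HOL-Real_Asymp.Real_Asymp"
begin

text \<open>The lower bound follows Le Cam's method with a prior spread over many smoothness levels at
  once. A perturbation 1 + a \<Sum> \<xi>(k) \<phi>(k) of the null density, supported on a dyadic block
  of D eigenfunctions with independent random signs \<xi>, is least favourable for the smoothness
  index \<theta> with N^(4s/(4s+\<theta>+1)) = N / sqrt D, where N = n / sqrt (log log n); as \<theta> ranges
  over [\<theta>1, \<theta>2] there are about log N such blocks. Averaging also over a uniformly chosen
  block, the perturbations from different blocks are orthogonal, so the chi-square divergence of
  the mixture of product measures from the null is at most (exp (c^2 log log n) - 1) / #blocks,
  which tends to 0 when c is small.\<close>

lemma integrable_bounded_on_space:
  fixes f :: "'a \<Rightarrow> real"
  assumes "finite_measure Q" "f \<in> borel_measurable Q" "\<And>x. x \<in> space Q \<Longrightarrow> \<bar>f x\<bar> \<le> B"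
  shows "integrable Q f"
  using assms by (intro finite_measure.integrable_const_bound[where B=B]) (auto intro!: AE_I2)

lemma (in prob_space) integral_abs_le_sqrt_integral_square:
  fixes h :: "'a \<Rightarrow> real"
  assumes "integrable M h" "integrable M (\<lambda>x. (h x)^2)"
  shows "(\<integral>x. \<bar>h x\<bar> \<partial>M) \<le> sqrt (\<integral>x. (h x)^2 \<partial>M)"
proof -
  have "0 \<le> variance (\<lambda>x. \<bar>h x\<bar>)" by (rule variance_positive)
  then have "(\<integral>x. \<bar>h x\<bar> \<partial>M)^2 \<le> (\<integral>x. (h x)^2 \<partial>M)"
    using assms by (subst (asm) variance_eq) auto
  then show ?thesis by (rule real_le_rsqrt)
qed

lemma prob_space_density_one_plus:
  assumes "prob_space M" "u \<in> borel_measurable M" "\<And>x. \<bar>u x\<bar> \<le> 1" "(\<integral>x. u x \<partial>M) = 0"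
  shows "prob_space (density M (\<lambda>x. ennreal (1 + u x)))"
proof -
  interpret prob_space M by fact
  have iu: "integrable M u" using assms by (intro integrable_const_bound[where B=1]) auto
  have nonneg: "0 \<le> 1 + u x" for x using assms(3)[of x] by linarith
  have "emeasure (density M (\<lambda>x. ennreal (1 + u x))) (space M) = (\<integral>\<^sup>+ x. ennreal (1 + u x) \<partial>M)"
    using assms by (subst emeasure_density) (auto intro!: nn_integral_cong)
  also have "\<dots> = ennreal (\<integral>x. 1 + u x \<partial>M)"
    using iu nonneg by (intro nn_integral_eq_integral AE_I2) auto
  also have "\<dots> = 1" using iu assms(4) by (simp add: prob_space)
  finally show ?thesis by (intro prob_spaceI) simp
qed

lemma PiM_density_prod:
  assumes M: "prob_space M" and g: "g \<in> borel_measurable M" "\<And>x. 0 \<le> g x"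
    and Pg: "prob_space (density M (\<lambda>x. ennreal (g x)))" and I: "finite I"
  shows "PiM I (\<lambda>_. density M (\<lambda>x. ennreal (g x))) =
         density (PiM I (\<lambda>_. M)) (\<lambda>x. ennreal (\<Prod>i\<in>I. g (x i)))"
proof -
  interpret D: product_sigma_finite "\<lambda>_. density M (\<lambda>x. ennreal (g x))"
    by (simp add: product_sigma_finite_def prob_space_imp_sigma_finite Pg)
  interpret P: product_sigma_finite "\<lambda>_. M"
    by (simp add: product_sigma_finite_def prob_space_imp_sigma_finite M)
  show ?thesis
  proof (rule D.PiM_eqI[symmetric])
    show "sets (density (PiM I (\<lambda>_. M)) (\<lambda>x. ennreal (\<Prod>i\<in>I. g (x i))))
        = sets (PiM I (\<lambda>_. density M (\<lambda>x. ennreal (g x))))"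
      by (auto intro!: sets_PiM_cong)
    fix A assume "\<And>i. i \<in> I \<Longrightarrow> A i \<in> sets (density M (\<lambda>x. ennreal (g x)))"
    then have A: "\<And>i. i \<in> I \<Longrightarrow> A i \<in> sets M" by simp
    have "emeasure (density (PiM I (\<lambda>_. M)) (\<lambda>x. ennreal (\<Prod>i\<in>I. g (x i)))) (PiE I A)
        = (\<integral>\<^sup>+ x. ennreal (\<Prod>i\<in>I. g (x i)) * indicator (PiE I A) x \<partial>PiM I (\<lambda>_. M))"
      using A I g(1) by (intro emeasure_density sets_PiM_I_finite) auto
    also have "\<dots> = (\<integral>\<^sup>+ x. (\<Prod>i\<in>I. ennreal (g (x i)) * indicator (A i) (x i)) \<partial>PiM I (\<lambda>_. M))"
    proof (intro nn_integral_cong)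
      fix x assume x: "x \<in> space (PiM I (\<lambda>_. M))"
      have "indicator (PiE I A) x = (\<Prod>i\<in>I. indicator (A i) (x i) :: ennreal)"
        using x I by (auto simp: indicator_def space_PiM PiE_def Pi_def extensional_def)
      then show "ennreal (\<Prod>i\<in>I. g (x i)) * indicator (PiE I A) x
          = (\<Prod>i\<in>I. ennreal (g (x i)) * indicator (A i) (x i))"
        using g(2) by (simp add: prod.distrib prod_ennreal)
    qed
    also have "\<dots> = (\<Prod>i\<in>I. \<integral>\<^sup>+ y. ennreal (g y) * indicator (A i) y \<partial>M)"
      using I A g(1) by (intro P.product_nn_integral_prod) auto
    also have "\<dots> = (\<Prod>i\<in>I. emeasure (density M (\<lambda>x. ennreal (g x))) (A i))"
      using A g(1) by (intro prod.cong refl) (simp add: emeasure_density)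
    finally show "emeasure (density (PiM I (\<lambda>_. M)) (\<lambda>x. ennreal (\<Prod>i\<in>I. g (x i)))) (PiE I A)
        = (\<Prod>i\<in>I. emeasure (density M (\<lambda>x. ennreal (g x))) (A i))" .
  qed (fact I)
qed

lemma (in prob_space) test_risk_ge_one_minus_chi2:
  fixes L T :: "'a \<Rightarrow> real"
  assumes L: "integrable M L" "integrable M (\<lambda>x. (L x - 1)^2)"
    and T: "T \<in> borel_measurable M" "\<And>x. x \<in> space M \<Longrightarrow> 0 \<le> T x \<and> T x \<le> 1"
  shows "1 - sqrt (\<integral>x. (L x - 1)^2 \<partial>M) \<le> (\<integral>x. T x \<partial>M) + (\<integral>x. L x * (1 - T x) \<partial>M)"
proof -
  have iT: "integrable M T" using T by (intro integrable_const_bound[where B=1]) auto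
  have iLT: "integrable M (\<lambda>x. (L x - 1) * (1 - T x))"
  proof (rule Bochner_Integration.integrable_bound)
    show "integrable M (\<lambda>x. L x - 1)" using L(1) by simp
    show "AE x in M. norm ((L x - 1) * (1 - T x)) \<le> norm (L x - 1)"
      using T(2) by (intro AE_I2) (auto simp: abs_mult intro!: mult_left_le)
  qed (use L(1) T(1) in measurable)
  have "(\<integral>x. T x \<partial>M) + (\<integral>x. L x * (1 - T x) \<partial>M) = 1 + (\<integral>x. (L x - 1) * (1 - T x) \<partial>M)"
  proof -
    have "(\<lambda>x. L x * (1 - T x)) = (\<lambda>x. (L x - 1) * (1 - T x) + 1 - T x)" by (auto simp: algebra_simps)
    then show ?thesis using iLT iT by (simp add: prob_space)
  qed
  moreover have "- (\<integral>x. \<bar>L x - 1\<bar> \<partial>M) \<le> (\<integral>x. (L x - 1) * (1 - T x) \<partial>M)"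
  proof -
    have "(\<integral>x. - \<bar>L x - 1\<bar> \<partial>M) \<le> (\<integral>x. (L x - 1) * (1 - T x) \<partial>M)"
    proof (rule integral_mono)
      fix x assume x: "x \<in> space M"
      have "\<bar>(L x - 1) * (1 - T x)\<bar> \<le> \<bar>L x - 1\<bar>"
        unfolding abs_mult using T(2)[OF x] by (intro mult_left_le) auto
      then show "- \<bar>L x - 1\<bar> \<le> (L x - 1) * (1 - T x)" by linarith
    qed (use L(1) iLT in auto)
    then show ?thesis by simp
  qed
  moreover have "(\<integral>x. \<bar>L x - 1\<bar> \<partial>M) \<le> sqrt (\<integral>x. (L x - 1)^2 \<partial>M)"
    using L by (intro integral_abs_le_sqrt_integral_square) auto
  ultimately show ?thesis by linarith
qed

lemma (in prob_space) integral_PiM_prod_one_plus: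
  fixes u v :: "'a \<Rightarrow> real"
  assumes "finite I" "u \<in> borel_measurable M" "v \<in> borel_measurable M"
    "\<And>x. \<bar>u x\<bar> \<le> 1" "\<And>x. \<bar>v x\<bar> \<le> 1" "(\<integral>x. u x \<partial>M) = 0" "(\<integral>x. v x \<partial>M) = 0"
  shows "(\<integral>x. (\<Prod>i\<in>I. 1 + u (x i)) * (\<Prod>i\<in>I. 1 + v (x i)) \<partial>PiM I (\<lambda>_. M))
         = (1 + (\<integral>x. u x * v x \<partial>M)) ^ card I"
proof -
  interpret product_sigma_finite "\<lambda>_. M"
    by (simp add: product_sigma_finite_def prob_space_imp_sigma_finite prob_space_axioms)
  have iu: "integrable M u" "integrable M v"
    using assms by (auto intro!: integrable_const_bound[where B=1])
  have iuv: "integrable M (\<lambda>x. u x * v x)"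
    using assms by (intro integrable_const_bound[where B=1] AE_I2) (auto simp: abs_mult intro: mult_le_one)
  have "(\<integral>x. (\<Prod>i\<in>I. 1 + u (x i)) * (\<Prod>i\<in>I. 1 + v (x i)) \<partial>PiM I (\<lambda>_. M))
      = (\<integral>x. (\<Prod>i\<in>I. (1 + u (x i)) * (1 + v (x i))) \<partial>PiM I (\<lambda>_. M))"
    by (simp add: prod.distrib)
  also have "\<dots> = (\<Prod>i\<in>I. \<integral>x. (1 + u x) * (1 + v x) \<partial>M)"
    using assms(1) iu iuv by (intro product_integral_prod) (auto simp: algebra_simps)
  also have "(\<integral>x. (1 + u x) * (1 + v x) \<partial>M) = 1 + (\<integral>x. u x * v x \<partial>M)"
  proof -
    have "(\<lambda>x. (1 + u x) * (1 + v x)) = (\<lambda>x. 1 + u x + v x + u x * v x)"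
      by (auto simp: algebra_simps)
    then show ?thesis using iu iuv assms(6,7) by (simp add: prob_space)
  qed
  finally show ?thesis by simp
qed

lemma (in prob_space) integral_PiM_density_one_plus:
  fixes u :: "'a \<Rightarrow> real"
  assumes I: "finite I" and u: "u \<in> borel_measurable M" "\<And>x. \<bar>u x\<bar> \<le> 1" "(\<integral>x. u x \<partial>M) = 0"
    and f: "f \<in> borel_measurable (PiM I (\<lambda>_. M))"
  shows "(\<integral>x. f x \<partial>PiM I (\<lambda>_. density M (\<lambda>x. ennreal (1 + u x))))
       = (\<integral>x. (\<Prod>i\<in>I. 1 + u (x i)) * f x \<partial>PiM I (\<lambda>_. M))"
proof -
  have nonneg: "0 \<le> 1 + u x" for x using u(2)[of x] by linarith
  have "PiM I (\<lambda>_. density M (\<lambda>x. ennreal (1 + u x)))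
      = density (PiM I (\<lambda>_. M)) (\<lambda>x. ennreal (\<Prod>i\<in>I. 1 + u (x i)))"
    using u nonneg I by (intro PiM_density_prod prob_space_axioms prob_space_density_one_plus) auto
  moreover have "(\<lambda>x. \<Prod>i\<in>I. 1 + u (x i)) \<in> borel_measurable (PiM I (\<lambda>_. M))"
    using u(1) by measurable
  ultimately show ?thesis using f nonneg by (simp add: integral_density prod_nonneg)
qed

lemma mixture_test_risk_lower_bound:
  fixes u :: "'s \<Rightarrow> 'a \<Rightarrow> real" and w :: "'s \<Rightarrow> real" and T :: "(nat \<Rightarrow> 'a) \<Rightarrow> real"
  assumes M: "prob_space M" and S: "finite S" and w: "\<And>s. s \<in> S \<Longrightarrow> 0 \<le> w s" "sum w S = 1"
    and u: "\<And>s. s \<in> S \<Longrightarrow> u s \<in> borel_measurable M"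
      "\<And>s x. s \<in> S \<Longrightarrow> \<bar>u s x\<bar> \<le> 1" "\<And>s. s \<in> S \<Longrightarrow> (\<integral>x. u s x \<partial>M) = 0"
    and T: "T \<in> borel_measurable (PiM {..<n} (\<lambda>_. M))"
      "\<And>x. x \<in> space (PiM {..<n} (\<lambda>_. M)) \<Longrightarrow> 0 \<le> T x \<and> T x \<le> 1"
  shows "1 - sqrt ((\<Sum>s\<in>S. \<Sum>t\<in>S. w s * w t * (1 + (\<integral>x. u s x * u t x \<partial>M))^n) - 1)
         \<le> (\<integral>x. T x \<partial>PiM {..<n} (\<lambda>_. M)) +
            (\<Sum>s\<in>S. w s * (\<integral>x. 1 - T x \<partial>PiM {..<n} (\<lambda>_. density M (\<lambda>x. ennreal (1 + u s x)))))"
proof -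
  define Q where "Q = PiM {..<n} (\<lambda>_. M)"
  interpret M: prob_space M by fact
  interpret Q: prob_space Q unfolding Q_def by (intro prob_space_PiM M)
  define G where "G s x = (\<Prod>i<n. 1 + u s (x i))" for s x
  define L where "L x = (\<Sum>s\<in>S. w s * G s x)" for x
  have Gm: "G s \<in> borel_measurable Q" if "s \<in> S" for s
    using u(1)[OF that] unfolding G_def Q_def by measurable
  have factor: "0 \<le> 1 + u s y" "1 + u s y \<le> 2" if "s \<in> S" for s y
    using u(2)[OF that, of y] by auto
  have Gnn: "0 \<le> G s x" if "s \<in> S" for s x
    unfolding G_def using factor[OF that] by (intro prod_nonneg) auto
  have Gb: "G s x \<le> 2 ^ n" if "s \<in> S" for s x
  proof -
    have "G s x \<le> (\<Prod>i<n. 2)"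
      unfolding G_def using factor[OF that] by (intro prod_mono) auto
    then show ?thesis by simp
  qed
  have GG: "(\<integral>x. G s x * G t x \<partial>Q) = (1 + (\<integral>x. u s x * u t x \<partial>M))^n" if "s \<in> S" "t \<in> S" for s t
    unfolding G_def Q_def using that u by (subst M.integral_PiM_prod_one_plus) auto
  have G1: "(\<integral>x. G s x \<partial>Q) = 1" if "s \<in> S" for s
    using M.integral_PiM_prod_one_plus[of "{..<n}" "u s" "\<lambda>_. 0"] that u unfolding G_def Q_def by simp
  have iG: "integrable Q (G s)" if "s \<in> S" for s
    using Gm[OF that] Gb[OF that] Gnn[OF that]
    by (intro integrable_bounded_on_space[where B="2^n"] Q.finite_measure_axioms) auto
  have iGG: "integrable Q (\<lambda>x. G s x * G t x)" if "s \<in> S" "t \<in> S" for s t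
    using Gm Gb Gnn that
    by (intro integrable_bounded_on_space[where B="2^n * 2^n"] Q.finite_measure_axioms)
      (auto simp: abs_mult intro!: mult_mono)
  have iL: "integrable Q L" unfolding L_def using iG by auto
  have intL: "(\<integral>x. L x \<partial>Q) = 1"
    unfolding L_def using iG G1 w(2) by (simp add: integral_sum)
  have chi2: "(\<integral>x. (L x - 1)^2 \<partial>Q) = (\<Sum>s\<in>S. \<Sum>t\<in>S. w s * w t * (1 + (\<integral>x. u s x * u t x \<partial>M))^n) - 1"
  proof -
    have sq: "(\<lambda>x. (L x - 1)^2) = (\<lambda>x. (\<Sum>s\<in>S. \<Sum>t\<in>S. w s * w t * (G s x * G t x)) - 2 * L x + 1)"
      by (auto simp: L_def power2_eq_square algebra_simps sum_product sum_distrib_left)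
    have "(\<integral>x. (\<Sum>s\<in>S. \<Sum>t\<in>S. w s * w t * (G s x * G t x)) \<partial>Q)
        = (\<Sum>s\<in>S. \<Sum>t\<in>S. w s * w t * (\<integral>x. G s x * G t x \<partial>Q))"
      using iGG by (simp add: integral_sum)
    then show ?thesis
      unfolding sq using iGG iL intL GG by (simp add: Q.prob_space)
  qed
  have iL2: "integrable Q (\<lambda>x. (L x - 1)^2)"
  proof -
    have "(\<lambda>x. (L x - 1)^2) = (\<lambda>x. (\<Sum>s\<in>S. \<Sum>t\<in>S. w s * w t * (G s x * G t x)) - 2 * L x + 1)"
      by (auto simp: L_def power2_eq_square algebra_simps sum_product sum_distrib_left)
    then show ?thesis using iGG iL by simp
  qed
  have alt: "(\<integral>x. 1 - T x \<partial>PiM {..<n} (\<lambda>_. density M (\<lambda>x. ennreal (1 + u s x))))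
      = (\<integral>x. G s x * (1 - T x) \<partial>Q)" if "s \<in> S" for s
    unfolding G_def Q_def using u[OF that] T(1) by (intro M.integral_PiM_density_one_plus) auto
  have iGT: "integrable Q (\<lambda>x. G s x * (1 - T x))" if "s \<in> S" for s
  proof (rule integrable_bounded_on_space[where B="2^n"])
    show "(\<lambda>x. G s x * (1 - T x)) \<in> borel_measurable Q" using Gm[OF that] T(1) by (simp add: Q_def)
    fix x assume "x \<in> space Q"
    then have "\<bar>1 - T x\<bar> \<le> 1" using T(2) by (auto simp: Q_def)
    then show "\<bar>G s x * (1 - T x)\<bar> \<le> 2^n"
      using Gb[OF that, of x] Gnn[OF that, of x] unfolding abs_mult
      by (metis abs_of_nonneg mult_left_le order_trans)
  qed (rule Q.finite_measure_axioms)
  have "(\<Sum>s\<in>S. w s * (\<integral>x. 1 - T x \<partial>PiM {..<n} (\<lambda>_. density M (\<lambda>x. ennreal (1 + u s x)))))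
      = (\<integral>x. L x * (1 - T x) \<partial>Q)"
    using alt iGT by (simp add: L_def integral_sum sum_distrib_right mult.assoc)
  moreover have "1 - sqrt (\<integral>x. (L x - 1)^2 \<partial>Q) \<le> (\<integral>x. T x \<partial>Q) + (\<integral>x. L x * (1 - T x) \<partial>Q)"
    using iL iL2 T by (intro Q.test_risk_ge_one_minus_chi2) (auto simp: Q_def)
  ultimately show ?thesis using chi2 unfolding Q_def by simp
qed

lemma half_exp_plus_exp_minus_le:
  fixes t :: real assumes "0 \<le> t" "t \<le> 1"
  shows "(exp t + exp (-t)) / 2 \<le> 1 + t^2"
proof -
  have e1: "exp t \<le> 1 + t + t^2" using exp_bound[OF assms] .
  have "exp t \<ge> 1 + t" by simp
  then have e2: "exp (-t) \<le> 1 / (1 + t)" using assms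
    by (simp add: exp_minus divide_simps)
  have "(1 - t + t^2) * (1 + t) = 1 + t^3" by (simp add: algebra_simps power2_eq_square power3_eq_cube)
  moreover have "0 \<le> t^3" using assms by simp
  ultimately have "1 \<le> (1 - t + t^2) * (1 + t)" by simp
  then have "1 / (1 + t) \<le> 1 - t + t^2" using assms by (simp add: divide_le_eq)
  then show ?thesis using e1 e2 by simp
qed

text \<open>Bounding (1 + x)^n by exp (n x) makes the average over independent signs factorise into a
  power of cosh (n a^2).\<close>

lemma rademacher_chi2_bound:
  fixes B :: "nat set" and a :: real and n :: nat
  assumes B: "finite B" and a: "a^2 * real (card B) \<le> 1" and t: "real n * a^2 \<le> 1"
  shows "(\<Sum>\<xi>\<in>PiE B (\<lambda>_. {-1,1::real}). \<Sum>\<eta>\<in>PiE B (\<lambda>_. {-1,1::real}).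
            (1 / 2 ^ card B) * (1 / 2 ^ card B) * (1 + a^2 * (\<Sum>k\<in>B. \<xi> k * \<eta> k))^n)
         \<le> exp (real (card B) * (real n * a^2)^2)"
proof -
  define D where "D = card B"
  define t where "t = real n * a^2"
  define P where "P = PiE B (\<lambda>_. {-1,1::real})"
  have t0: "0 \<le> t" "t \<le> 1" using t by (auto simp: t_def)
  have cardP: "card P = 2 ^ D" unfolding P_def D_def using B by (simp add: card_PiE) (metis numeral_2_eq_2)
  have finP: "finite P" unfolding P_def using B by (simp add: finite_PiE)
  have step1: "(1 + a^2 * (\<Sum>k\<in>B. \<xi> k * \<eta> k))^n \<le> (\<Prod>k\<in>B. exp (t * (\<xi> k * \<eta> k)))"
    if "\<xi> \<in> P" "\<eta> \<in> P" for \<xi> \<eta>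
  proof -
    have unit: "\<bar>\<xi> k * \<eta> k\<bar> = 1" if "k \<in> B" for k
      using \<open>\<xi> \<in> P\<close> \<open>\<eta> \<in> P\<close> that by (fastforce simp: P_def PiE_def Pi_def abs_mult)
    have "\<bar>\<Sum>k\<in>B. \<xi> k * \<eta> k\<bar> \<le> (\<Sum>k\<in>B. \<bar>\<xi> k * \<eta> k\<bar>)" by (rule sum_abs)
    then have "\<bar>\<Sum>k\<in>B. \<xi> k * \<eta> k\<bar> \<le> real (card B)" using unit by simp
    then have "a^2 * (- real (card B)) \<le> a^2 * (\<Sum>k\<in>B. \<xi> k * \<eta> k)"
      by (intro mult_left_mono) auto
    then have nn: "0 \<le> 1 + a^2 * (\<Sum>k\<in>B. \<xi> k * \<eta> k)" using a by simp
    have "(1 + a^2 * (\<Sum>k\<in>B. \<xi> k * \<eta> k))^n \<le> (exp (a^2 * (\<Sum>k\<in>B. \<xi> k * \<eta> k)))^n"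
      using nn by (intro power_mono) auto
    also have "\<dots> = exp (t * (\<Sum>k\<in>B. \<xi> k * \<eta> k))"
      by (simp add: t_def exp_of_nat_mult[symmetric] mult.assoc)
    also have "\<dots> = (\<Prod>k\<in>B. exp (t * (\<xi> k * \<eta> k)))"
      using B by (simp add: sum_distrib_left exp_sum)
    finally show ?thesis .
  qed
  have step2: "(\<Sum>\<xi>\<in>P. \<Prod>k\<in>B. exp (t * (\<xi> k * \<eta> k))) = (exp t + exp (-t)) ^ D" if "\<eta> \<in> P" for \<eta>
  proof -
    have "(\<Sum>\<xi>\<in>P. \<Prod>k\<in>B. exp (t * (\<xi> k * \<eta> k))) = (\<Prod>k\<in>B. \<Sum>v\<in>{-1,1::real}. exp (t * (v * \<eta> k)))"
      unfolding P_def using B by (subst prod_sum_PiE) auto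
    also have "\<dots> = (\<Prod>k\<in>B. exp t + exp (-t))"
      using that by (intro prod.cong refl) (auto simp: P_def PiE_def Pi_def)
    finally show ?thesis by (simp add: D_def)
  qed
  have "(\<Sum>\<xi>\<in>P. \<Sum>\<eta>\<in>P. (1 / 2 ^ D) * (1 / 2 ^ D) * (1 + a^2 * (\<Sum>k\<in>B. \<xi> k * \<eta> k))^n)
      \<le> (\<Sum>\<xi>\<in>P. \<Sum>\<eta>\<in>P. (1 / 2 ^ D) * (1 / 2 ^ D) * (\<Prod>k\<in>B. exp (t * (\<xi> k * \<eta> k))))"
    using step1 by (intro sum_mono mult_left_mono) auto
  also have "\<dots> = (1 / 2 ^ D) * (1 / 2 ^ D) * (\<Sum>\<eta>\<in>P. \<Sum>\<xi>\<in>P. (\<Prod>k\<in>B. exp (t * (\<xi> k * \<eta> k))))"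
    by (subst sum.swap) (simp add: sum_distrib_left)
  also have "\<dots> = (1 / 2 ^ D) * (1 / 2 ^ D) * (\<Sum>\<eta>\<in>P. (exp t + exp (-t)) ^ D)"
    using step2 by simp
  also have "\<dots> = ((exp t + exp (-t)) / 2) ^ D"
    using cardP by (simp add: power_divide)
  also have "\<dots> \<le> (1 + t^2) ^ D"
    using half_exp_plus_exp_minus_le[OF t0] by (intro power_mono) (auto intro: add_nonneg_nonneg)
  also have "\<dots> \<le> (exp (t^2)) ^ D"
    by (intro power_mono) auto
  also have "\<dots> = exp (real D * t^2)" by (simp add: exp_of_nat_mult[symmetric])
  finally show ?thesis unfolding P_def D_def t_def .
qed

lemma sum_Sigma_split:
  assumes "finite J" "\<And>j. j \<in> J \<Longrightarrow> finite (P j)"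
  shows "(\<Sum>s\<in>Sigma J P. f s) = (\<Sum>j\<in>J. \<Sum>\<xi>\<in>P j. f (j, \<xi>))"
  using sum.Sigma[of J P "\<lambda>j \<xi>. f (j, \<xi>)"] assms by (simp add: case_prod_beta')

lemma block_mixture_chi2_bound:
  fixes J :: "nat set" and P :: "nat \<Rightarrow> 'x set" and q :: "nat \<Rightarrow> 'x \<Rightarrow> real"
    and F :: "nat \<Rightarrow> 'x \<Rightarrow> nat \<Rightarrow> 'x \<Rightarrow> real"
  assumes J: "finite J" "J \<noteq> {}" and P: "\<And>j. j \<in> J \<Longrightarrow> finite (P j)"
    and q1: "\<And>j. j \<in> J \<Longrightarrow> (\<Sum>\<xi>\<in>P j. q j \<xi>) = 1"
    and off: "\<And>j j' \<xi> \<xi>'. j \<in> J \<Longrightarrow> j' \<in> J \<Longrightarrow> j \<noteq> j' \<Longrightarrow> \<xi> \<in> P j \<Longrightarrow> \<xi>' \<in> P j' \<Longrightarrow> F j \<xi> j' \<xi>' = 1"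
    and diag: "\<And>j. j \<in> J \<Longrightarrow> (\<Sum>\<xi>\<in>P j. \<Sum>\<xi>'\<in>P j. q j \<xi> * q j \<xi>' * F j \<xi> j \<xi>') \<le> E"
  shows "(\<Sum>s\<in>Sigma J P. \<Sum>t\<in>Sigma J P. (q (fst s) (snd s) / card J) * (q (fst t) (snd t) / card J)
            * F (fst s) (snd s) (fst t) (snd t))
         \<le> E / card J + (real (card J) - 1) / card J"
proof -
  define m where "m = real (card J)"
  have m0: "0 < m" using J by (simp add: m_def card_gt_0_iff)
  define G where "G j j' = (\<Sum>\<xi>\<in>P j. \<Sum>\<xi>'\<in>P j'. q j \<xi> * q j' \<xi>' * F j \<xi> j' \<xi>')" for j j'
  have Goff: "G j j' = 1" if "j \<in> J" "j' \<in> J" "j \<noteq> j'" for j j'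
  proof -
    have "G j j' = (\<Sum>\<xi>\<in>P j. \<Sum>\<xi>'\<in>P j'. q j \<xi> * q j' \<xi>')"
      unfolding G_def using off[OF that] by (intro sum.cong refl) auto
    also have "\<dots> = (\<Sum>\<xi>\<in>P j. q j \<xi>) * (\<Sum>\<xi>'\<in>P j'. q j' \<xi>')" by (simp add: sum_product)
    finally show ?thesis using q1 that by simp
  qed
  have rowsum: "(\<Sum>j'\<in>J. G j j') \<le> E + (m - 1)" if j: "j \<in> J" for j
  proof -
    have "(\<Sum>j'\<in>J. G j j') = G j j + (\<Sum>j'\<in>J - {j}. G j j')"
      using J j by (simp add: sum.remove)
    also have "(\<Sum>j'\<in>J - {j}. G j j') = (\<Sum>j'\<in>J - {j}. 1)"
      using Goff j by (intro sum.cong refl) auto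
    also have "\<dots> = m - 1" using J j by (simp add: m_def of_nat_diff card_gt_0_iff Suc_leI)
    finally show ?thesis using diag[OF j] unfolding G_def by simp
  qed
  have "(\<Sum>s\<in>Sigma J P. \<Sum>t\<in>Sigma J P. (q (fst s) (snd s) / card J) * (q (fst t) (snd t) / card J) * F (fst s) (snd s) (fst t) (snd t))
      = (\<Sum>j\<in>J. \<Sum>\<xi>\<in>P j. \<Sum>j'\<in>J. \<Sum>\<xi>'\<in>P j'. (q j \<xi> / m) * (q j' \<xi>' / m) * F j \<xi> j' \<xi>')"
    using J P by (simp add: sum_Sigma_split m_def)
  also have "\<dots> = (\<Sum>j\<in>J. \<Sum>j'\<in>J. G j j' / m^2)"
  proof (intro sum.cong refl)
    fix j assume j: "j \<in> J"
    have "(\<Sum>\<xi>\<in>P j. \<Sum>j'\<in>J. \<Sum>\<xi>'\<in>P j'. (q j \<xi> / m) * (q j' \<xi>' / m) * F j \<xi> j' \<xi>')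
        = (\<Sum>j'\<in>J. \<Sum>\<xi>\<in>P j. \<Sum>\<xi>'\<in>P j'. (q j \<xi> / m) * (q j' \<xi>' / m) * F j \<xi> j' \<xi>')"
      by (rule sum.swap)
    also have "\<dots> = (\<Sum>j'\<in>J. G j j' / m^2)"
      unfolding G_def by (intro sum.cong refl) (simp add: sum_divide_distrib power2_eq_square)
    finally show "(\<Sum>\<xi>\<in>P j. \<Sum>j'\<in>J. \<Sum>\<xi>'\<in>P j'. (q j \<xi> / m) * (q j' \<xi>' / m) * F j \<xi> j' \<xi>') = (\<Sum>j'\<in>J. G j j' / m^2)" .
  qed
  also have "\<dots> = (\<Sum>j\<in>J. (\<Sum>j'\<in>J. G j j') / m^2)" by (simp add: sum_divide_distrib)
  also have "\<dots> \<le> (\<Sum>j\<in>J. (E + (m - 1)) / m^2)"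
    using rowsum m0 by (intro sum_mono divide_right_mono) auto
  also have "\<dots> = m * (E + (m - 1)) / m^2" by (simp add: m_def)
  also have "\<dots> = E / m + (m - 1) / m" using m0 by (simp add: power2_eq_square divide_simps)
  finally show ?thesis by (simp add: m_def)
qed

definition clip :: "real \<Rightarrow> real" where "clip v = max (-1) (min 1 v)"

lemma abs_clip_le: "\<bar>clip v\<bar> \<le> 1" by (auto simp: clip_def)
lemma clip_id: "\<bar>v\<bar> \<le> 1 \<Longrightarrow> clip v = v" by (auto simp: clip_def)

lemma borel_measurable_clip[measurable]: "clip \<in> borel_measurable borel"
  unfolding clip_def by measurable

text \<open>The eigenfunctions are bounded only almost everywhere; the clipping, which is inactive almost
  everywhere, makes the bound by 1 of the perturbation hold everywhere.\<close>

definition sign_perturbation ::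
    "(nat \<Rightarrow> 'a \<Rightarrow> real) \<Rightarrow> real \<Rightarrow> nat set \<Rightarrow> (nat \<Rightarrow> real) \<Rightarrow> 'a \<Rightarrow> real" where
  "sign_perturbation ph a B \<xi> x = clip (a * (\<Sum>k\<in>B. \<xi> k * ph k x))"

lemma Fclass_if_scalings_in_RKHS:
  assumes f: "f \<in> L2 P0" and th: "0 < \<theta>" and Mc: "0 < Mc" and NK: "0 < NK" and \<rho>: "0 \<le> \<rho>"
    and g: "\<And>c. in_RKHS P0 lam ph (\<lambda>x. c * g x) \<and> RKHS_norm P0 lam ph (\<lambda>x. c * g x) = \<bar>c\<bar> * NK"
    and dist: "\<And>c. L2norm P0 (\<lambda>x. f x - c * g x) = \<bar>1 - c\<bar> * \<rho>"
    and small: "\<rho> \<le> Mc * NK powr (-1/\<theta>)"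
  shows "f \<in> Fclass P0 lam ph \<theta> Mc"
  unfolding Fclass_def
proof (intro CollectI conjI f allI impI)
  fix R :: real assume R: "0 < R"
  show "\<exists>fR. in_RKHS P0 lam ph fR \<and> RKHS_norm P0 lam ph fR \<le> R \<and>
      L2norm P0 (\<lambda>x. f x - fR x) \<le> Mc * R powr (- 1 / \<theta>)"
  proof (cases "NK \<le> R")
    case True
    then show ?thesis using g[of 1] dist[of 1] Mc by (intro exI[of _ "\<lambda>x. 1 * g x"]) auto
  next
    case False
    define c where "c = R / NK"
    have c: "0 < c" "c < 1" using False R NK by (auto simp: c_def)
    have "L2norm P0 (\<lambda>x. f x - c * g x) \<le> \<rho>"
      using dist[of c] c \<rho> by (simp add: mult_left_le_one_le)
    also have "\<dots> \<le> Mc * R powr (-1/\<theta>)"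
    proof -
      have "NK powr (-1/\<theta>) \<le> R powr (-1/\<theta>)"
        using False R th by (intro powr_mono2') auto
      then show ?thesis using small Mc by (smt (verit) mult_left_mono)
    qed
    finally show ?thesis using g[of c] c NK by (intro exI[of _ "\<lambda>x. c * g x"]) (simp add: c_def R less_imp_le)
  qed
qed

locale bounded_orthonormal_system =
  fixes P0 :: "'a measure" and ph :: "nat \<Rightarrow> 'a \<Rightarrow> real" and Bp :: real
  assumes prob_space_P0: "prob_space P0"
    and ph_measurable[measurable]: "\<And>k. ph k \<in> borel_measurable P0"
    and ph_bounded: "\<And>k. AE x in P0. \<bar>ph k x\<bar> \<le> Bp"
    and ph_orthonormal: "\<And>j k. (\<integral>x. ph j x * ph k x \<partial>P0) = (if j = k then 1 else 0)"
    and ph_mean_zero: "\<And>k. (\<integral>x. ph k x \<partial>P0) = 0"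
begin

interpretation prob_space P0 by (rule prob_space_P0)

lemma integrable_ph: "integrable P0 (ph k)"
  using ph_bounded[of k] by (intro integrable_const_bound[where B=Bp]) auto

lemma integrable_ph_mult: "integrable P0 (\<lambda>x. ph j x * ph k x)"
proof (intro integrable_const_bound[where B="Bp * Bp"])
  show "AE x in P0. norm (ph j x * ph k x) \<le> Bp * Bp"
    using ph_bounded[of j] ph_bounded[of k] by eventually_elim (auto simp: abs_mult intro: mult_mono)
qed measurable

lemma integral_lincomb_mult_ph:
  assumes "finite B"
  shows "(\<integral>x. (\<Sum>k\<in>B. c k * ph k x) * ph j x \<partial>P0) = (if j \<in> B then c j else 0)"
proof -
  have "(\<integral>x. (\<Sum>k\<in>B. c k * ph k x) * ph j x \<partial>P0) = (\<Sum>k\<in>B. c k * (\<integral>x. ph k x * ph j x \<partial>P0))"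
    using integrable_ph_mult by (simp add: sum_distrib_right mult.assoc integral_sum)
  also have "\<dots> = (\<Sum>k\<in>B. if k = j then c k else 0)" by (intro sum.cong) (auto simp: ph_orthonormal)
  finally show ?thesis using assms by (simp add: sum.delta')
qed

lemma integral_lincomb_mult_lincomb:
  assumes "finite B1" "finite B2"
  shows "(\<integral>x. (\<Sum>k\<in>B1. c1 k * ph k x) * (\<Sum>j\<in>B2. c2 j * ph j x) \<partial>P0) = (\<Sum>k\<in>B1 \<inter> B2. c1 k * c2 k)"
proof -
  have "(\<lambda>x. (\<Sum>k\<in>B1. c1 k * ph k x) * (\<Sum>j\<in>B2. c2 j * ph j x))
      = (\<lambda>x. \<Sum>j\<in>B2. c2 j * ((\<Sum>k\<in>B1. c1 k * ph k x) * ph j x))"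
    by (auto simp: sum_distrib_left mult_ac)
  moreover have "integrable P0 (\<lambda>x. (\<Sum>k\<in>B1. c1 k * ph k x) * ph j x)" for j
    using integrable_ph_mult by (simp add: sum_distrib_right mult.assoc)
  ultimately have "(\<integral>x. (\<Sum>k\<in>B1. c1 k * ph k x) * (\<Sum>j\<in>B2. c2 j * ph j x) \<partial>P0)
      = (\<Sum>j\<in>B2. c2 j * (\<integral>x. (\<Sum>k\<in>B1. c1 k * ph k x) * ph j x \<partial>P0))"
    by (simp add: integral_sum)
  also have "\<dots> = (\<Sum>j\<in>B2. if j \<in> B1 then c2 j * c1 j else 0)"
    using assms by (intro sum.cong) (auto simp: integral_lincomb_mult_ph)
  also have "\<dots> = (\<Sum>k\<in>B1 \<inter> B2. c1 k * c2 k)"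
    using assms by (simp add: sum.If_cases Int_commute mult.commute)
  finally show ?thesis .
qed

lemma sign_perturbation_measurable[measurable]: "sign_perturbation ph a B \<xi> \<in> borel_measurable P0"
  unfolding sign_perturbation_def by measurable

lemma abs_sign_perturbation_le: "\<bar>sign_perturbation ph a B \<xi> x\<bar> \<le> 1"
  unfolding sign_perturbation_def by (rule abs_clip_le)

lemma AE_sign_perturbation_eq:
  assumes B: "finite B" and signs: "\<And>k. k \<in> B \<Longrightarrow> \<xi> k \<in> {-1,1}"
    and small: "\<bar>a\<bar> * real (card B) * Bp \<le> 1"
  shows "AE x in P0. sign_perturbation ph a B \<xi> x = (\<Sum>k\<in>B. (a * \<xi> k) * ph k x)"
proof -
  have "AE x in P0. \<forall>k\<in>B. \<bar>ph k x\<bar> \<le> Bp" using B ph_bounded by (simp add: AE_finite_all)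
  then show ?thesis
  proof eventually_elim
    case (elim x)
    have "\<bar>\<Sum>k\<in>B. \<xi> k * ph k x\<bar> \<le> (\<Sum>k\<in>B. \<bar>\<xi> k * ph k x\<bar>)" by (rule sum_abs)
    also have "\<dots> \<le> (\<Sum>k\<in>B. Bp)"
    proof (intro sum_mono)
      fix k assume "k \<in> B"
      then have "\<bar>\<xi> k\<bar> = 1" "\<bar>ph k x\<bar> \<le> Bp" using signs[of k] elim by auto
      then show "\<bar>\<xi> k * ph k x\<bar> \<le> Bp" by (simp add: abs_mult)
    qed
    finally have "\<bar>a\<bar> * \<bar>\<Sum>k\<in>B. \<xi> k * ph k x\<bar> \<le> \<bar>a\<bar> * (real (card B) * Bp)"
      by (intro mult_left_mono) auto
    then have "\<bar>a * (\<Sum>k\<in>B. \<xi> k * ph k x)\<bar> \<le> 1" using small by (simp add: abs_mult mult.assoc)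
    then show ?case
      unfolding sign_perturbation_def by (simp add: clip_id sum_distrib_left mult.assoc)
  qed
qed

lemma integral_sign_perturbation:
  assumes B: "finite B" and signs: "\<And>k. k \<in> B \<Longrightarrow> \<xi> k \<in> {-1,1}"
    and small: "\<bar>a\<bar> * real (card B) * Bp \<le> 1"
  shows "(\<integral>x. sign_perturbation ph a B \<xi> x \<partial>P0) = 0"
proof -
  have "(\<integral>x. sign_perturbation ph a B \<xi> x \<partial>P0) = (\<integral>x. (\<Sum>k\<in>B. (a * \<xi> k) * ph k x) \<partial>P0)"
    using AE_sign_perturbation_eq[where \<xi>=\<xi>, OF B signs small] by (intro integral_cong_AE) auto
  also have "\<dots> = 0" using integrable_ph by (simp add: integral_sum ph_mean_zero)
  finally show ?thesis .
qed

lemma coef_sign_perturbation: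
  assumes B: "finite B" and signs: "\<And>k. k \<in> B \<Longrightarrow> \<xi> k \<in> {-1,1}"
    and small: "\<bar>a\<bar> * real (card B) * Bp \<le> 1"
  shows "coef P0 ph (sign_perturbation ph a B \<xi>) j = (if j \<in> B then a * \<xi> j else 0)"
proof -
  have "(\<integral>x. sign_perturbation ph a B \<xi> x * ph j x \<partial>P0) = (\<integral>x. (\<Sum>k\<in>B. (a * \<xi> k) * ph k x) * ph j x \<partial>P0)"
    using AE_sign_perturbation_eq[where \<xi>=\<xi>, OF B signs small] by (intro integral_cong_AE) auto
  then show ?thesis using B by (simp add: coef_def integral_lincomb_mult_ph)
qed

lemma integral_sign_perturbation_mult:
  assumes "finite B" "\<And>k. k \<in> B \<Longrightarrow> \<xi> k \<in> {-1,1}" "\<bar>a\<bar> * real (card B) * Bp \<le> 1"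
    and "finite B'" "\<And>k. k \<in> B' \<Longrightarrow> \<xi>' k \<in> {-1,1}" "\<bar>a'\<bar> * real (card B') * Bp \<le> 1"
  shows "(\<integral>x. sign_perturbation ph a B \<xi> x * sign_perturbation ph a' B' \<xi>' x \<partial>P0)
       = a * a' * (\<Sum>k\<in>B \<inter> B'. \<xi> k * \<xi>' k)"
proof -
  have "(\<integral>x. sign_perturbation ph a B \<xi> x * sign_perturbation ph a' B' \<xi>' x \<partial>P0)
     = (\<integral>x. (\<Sum>k\<in>B. (a * \<xi> k) * ph k x) * (\<Sum>k\<in>B'. (a' * \<xi>' k) * ph k x) \<partial>P0)"
  proof (rule integral_cong_AE)
    have "AE x in P0. sign_perturbation ph a B \<xi> x = (\<Sum>k\<in>B. (a * \<xi> k) * ph k x)"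
      "AE x in P0. sign_perturbation ph a' B' \<xi>' x = (\<Sum>k\<in>B'. (a' * \<xi>' k) * ph k x)"
      by (rule AE_sign_perturbation_eq; fact assms)+
    then show "AE x in P0. sign_perturbation ph a B \<xi> x * sign_perturbation ph a' B' \<xi>' x
        = (\<Sum>k\<in>B. (a * \<xi> k) * ph k x) * (\<Sum>k\<in>B'. (a' * \<xi>' k) * ph k x)"
      by eventually_elim simp
  qed measurable
  also have "\<dots> = (\<Sum>k\<in>B \<inter> B'. (a * \<xi> k) * (a' * \<xi>' k))"
    using assms by (intro integral_lincomb_mult_lincomb)
  finally show ?thesis by (simp add: sum_distrib_left mult_ac)
qed

end

lemma density_dev_density_one_plus:
  assumes "prob_space P0" "u \<in> borel_measurable P0" "\<And>x. \<bar>u x\<bar> \<le> 1"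
  shows "AE x in P0. density_dev P0 (density P0 (\<lambda>x. ennreal (1 + u x))) x = u x"
proof -
  have "AE x in P0. ennreal (1 + u x) = RN_deriv P0 (density P0 (\<lambda>x. ennreal (1 + u x))) x"
    using assms by (intro sigma_finite_measure.RN_deriv_unique prob_space_imp_sigma_finite) auto
  then show ?thesis
  proof eventually_elim
    case (elim x)
    have "0 \<le> 1 + u x" using assms(3)[of x] by linarith
    then show ?case unfolding density_dev_def using elim[symmetric] by simp
  qed
qed

context bounded_orthonormal_system
begin

lemma integral_sign_perturbation_square:
  assumes B: "finite B" and signs: "\<And>k. k \<in> B \<Longrightarrow> \<xi> k \<in> {-1,1}"
    and small: "\<bar>a\<bar> * real (card B) * Bp \<le> 1"
  shows "(\<integral>x. sign_perturbation ph a B \<xi> x * sign_perturbation ph a B \<xi> x \<partial>P0) = a^2 * real (card B)"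
proof -
  have "(\<Sum>k\<in>B \<inter> B. \<xi> k * \<xi> k) = (\<Sum>k\<in>B. 1)"
    using signs by (intro sum.cong) force+
  then show ?thesis
    using integral_sign_perturbation_mult[OF B signs small B signs small] by (simp add: power2_eq_square)
qed

lemma sign_perturbation_scaled_in_RKHS:
  fixes lam :: "nat \<Rightarrow> real"
  assumes B: "finite B" and signs: "\<And>k. k \<in> B \<Longrightarrow> \<xi> k \<in> {-1,1}"
    and small: "\<bar>a\<bar> * real (card B) * Bp \<le> 1"
  shows "in_RKHS P0 lam ph (\<lambda>x. c * sign_perturbation ph a B \<xi> x)"
    and "RKHS_norm P0 lam ph (\<lambda>x. c * sign_perturbation ph a B \<xi> x) = \<bar>c\<bar> * sqrt (\<Sum>k\<in>B. a^2 / lam k)"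
proof -
  interpret prob_space P0 by (rule prob_space_P0)
  define u where "u = sign_perturbation ph a B \<xi>"
  have "(coef P0 ph (\<lambda>x. c * u x) k)^2 / lam k = (if k \<in> B then c^2 * (a^2 / lam k) else 0)" for k
  proof -
    have "coef P0 ph (\<lambda>x. c * u x) k = c * coef P0 ph u k" unfolding coef_def by (simp add: mult.assoc)
    moreover have "k \<in> B \<Longrightarrow> (\<xi> k)^2 = 1" using signs[of k] by (auto simp: power2_eq_square)
    ultimately show ?thesis
      unfolding u_def by (simp add: coef_sign_perturbation[OF B signs small] power_mult_distrib)
  qed
  then have "summable (\<lambda>k. (coef P0 ph (\<lambda>x. c * u x) k)^2 / lam k)"
    "(\<Sum>k. (coef P0 ph (\<lambda>x. c * u x) k)^2 / lam k) = c^2 * (\<Sum>k\<in>B. a^2 / lam k)"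
    using B by (simp_all add: summable_finite suminf_finite[of B] sum_distrib_left)
  moreover have "(\<lambda>x. c * u x) \<in> L2 P0"
  proof -
    have "integrable P0 (\<lambda>x. (c * u x)^2)"
    proof (intro integrable_const_bound[where B="c^2"] AE_I2)
      fix x have "(u x)^2 \<le> 1" using abs_sign_perturbation_le[of a B \<xi> x] by (simp add: u_def abs_square_le_1)
      then show "norm ((c * u x)^2) \<le> c^2" by (simp add: power_mult_distrib mult_left_le)
    qed (simp add: u_def)
    then show ?thesis unfolding L2_def u_def by simp
  qed
  moreover have "(\<integral>x. c * u x \<partial>P0) = 0"
    unfolding u_def using integral_sign_perturbation[OF B signs small] by simp
  ultimately show "in_RKHS P0 lam ph (\<lambda>x. c * sign_perturbation ph a B \<xi> x)"
    "RKHS_norm P0 lam ph (\<lambda>x. c * sign_perturbation ph a B \<xi> x) = \<bar>c\<bar> * sqrt (\<Sum>k\<in>B. a^2 / lam k)"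
    unfolding in_RKHS_def RKHS_norm_def u_def by (simp_all add: real_sqrt_mult)
qed

lemma sign_perturbation_density_in_Palt:
  fixes lam :: "nat \<Rightarrow> real"
  assumes B: "finite B" "B \<noteq> {}" and signs: "\<And>k. k \<in> B \<Longrightarrow> \<xi> k \<in> {-1,1}"
    and small: "\<bar>a\<bar> * real (card B) * Bp \<le> 1" and a0: "a \<noteq> 0"
    and lam: "\<And>k. 0 < lam k" and Nb: "(\<Sum>k\<in>B. a^2 / lam k) \<le> Nb"
    and th: "0 < \<theta>" and Mc: "0 < Mc"
    and approx: "sqrt (a^2 * real (card B)) \<le> Mc * (sqrt Nb) powr (-1/\<theta>)"
    and Delta: "\<Delta> \<le> a^2 * real (card B)"
  shows "density P0 (\<lambda>x. ennreal (1 + sign_perturbation ph a B \<xi> x)) \<in> Palt P0 lam ph \<Delta> \<theta> Mc"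
proof -
  define u where "u = sign_perturbation ph a B \<xi>"
  define P where "P = density P0 (\<lambda>x. ennreal (1 + u x))"
  define \<rho> where "\<rho> = sqrt (a^2 * real (card B))"
  define NK where "NK = sqrt (\<Sum>k\<in>B. a^2 / lam k)"
  have u_bound: "\<bar>u x\<bar> \<le> 1" for x unfolding u_def by (rule abs_sign_perturbation_le)
  have dev: "AE x in P0. density_dev P0 P x = u x"
    unfolding P_def u_def using abs_sign_perturbation_le
    by (intro density_dev_density_one_plus prob_space_P0) auto
  have dev_meas[measurable]: "density_dev P0 P \<in> borel_measurable P0"
    unfolding density_dev_def by measurable
  have norm_u: "(\<integral>x. u x * u x \<partial>P0) = a^2 * real (card B)"
    unfolding u_def by (rule integral_sign_perturbation_square[OF B(1) signs small])
  have dist: "L2norm P0 (\<lambda>x. density_dev P0 P x - c * u x) = \<bar>1 - c\<bar> * \<rho>" for c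
  proof -
    have "(\<integral>x. (density_dev P0 P x - c * u x)^2 \<partial>P0) = (\<integral>x. ((1 - c) * u x)^2 \<partial>P0)"
      using dev by (intro integral_cong_AE) (auto simp: u_def algebra_simps elim!: AE_mp)
    also have "\<dots> = (1 - c)^2 * (\<integral>x. u x * u x \<partial>P0)"
      by (simp add: power_mult_distrib power2_eq_square[of "u _"])
    finally show ?thesis unfolding L2norm_def \<rho>_def norm_u by (simp add: real_sqrt_mult)
  qed
  have NK_pos: "0 < NK"
    unfolding NK_def using B lam a0 by (simp add: sum_pos)
  note scaled = sign_perturbation_scaled_in_RKHS[where \<xi>=\<xi> and lam=lam, OF B(1) signs small,
      folded u_def NK_def]
  have "\<rho> \<le> Mc * NK powr (-1/\<theta>)"
  proof -
    have "(sqrt Nb) powr (-1/\<theta>) \<le> NK powr (-1/\<theta>)"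
      unfolding NK_def using Nb NK_pos th by (intro powr_mono2') (auto simp: NK_def)
    then show ?thesis using approx Mc unfolding \<rho>_def by (smt (verit) mult_left_mono)
  qed
  moreover have "density_dev P0 P \<in> L2 P0"
    using scaled(1)[where c=1] dev unfolding in_RKHS_def L2_def
    by (auto intro: integrable_cong_AE_imp elim!: AE_mp)
  ultimately have "density_dev P0 P \<in> Fclass P0 lam ph \<theta> Mc"
    using dist scaled th Mc NK_pos
    by (intro Fclass_if_scalings_in_RKHS[where g=u and NK=NK and \<rho>=\<rho>]) (auto simp: \<rho>_def)
  moreover have "(L2norm P0 (density_dev P0 P))^2 = a^2 * real (card B)"
    using dist[of 0] by (simp add: \<rho>_def)
  moreover have "prob_space P" "absolutely_continuous P0 P"
    unfolding P_def using u_bound integral_sign_perturbation[where \<xi>=\<xi>, OF B(1) signs small]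
    by (auto simp: u_def intro!: prob_space_density_one_plus prob_space_P0 absolutely_continuousI_density)
  ultimately show ?thesis
    unfolding Palt_def P_def u_def using Delta by simp
qed

end

lemma integral_one_minus_test_bounds:
  assumes T: "T \<in> tests P0 n" and P: "prob_space P" "sets P = sets P0"
  shows "0 \<le> (\<integral>x. 1 - T x \<partial>PiM {..<n} (\<lambda>_. P))" "(\<integral>x. 1 - T x \<partial>PiM {..<n} (\<lambda>_. P)) \<le> 1"
proof -
  interpret Q: prob_space "PiM {..<n} (\<lambda>_. P)" by (intro prob_space_PiM P(1))
  have "sets (PiM {..<n} (\<lambda>_. P)) = sets (PiM {..<n} (\<lambda>_. P0))"
    by (intro sets_PiM_cong) (auto simp: P(2))
  then have T_meas: "T \<in> borel_measurable (PiM {..<n} (\<lambda>_. P))"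
    using T unfolding tests_def by (simp cong: measurable_cong_sets)
  have T_range: "0 \<le> T x \<and> T x \<le> 1" if "x \<in> space (PiM {..<n} (\<lambda>_. P))" for x
    using T that sets_eq_imp_space_eq[OF P(2)] unfolding tests_def by (auto simp: space_PiM)
  show "0 \<le> (\<integral>x. 1 - T x \<partial>PiM {..<n} (\<lambda>_. P))"
    using T_range by (intro integral_nonneg_AE AE_I2) auto
  have "(\<integral>x. 1 - T x \<partial>PiM {..<n} (\<lambda>_. P)) \<le> (\<integral>x. 1 \<partial>PiM {..<n} (\<lambda>_. P))"
    using T_meas T_range
    by (intro integral_mono integrable_bounded_on_space[where B=1] Q.finite_measure_axioms) auto
  then show "(\<integral>x. 1 - T x \<partial>PiM {..<n} (\<lambda>_. P)) \<le> 1" by (simp add: Q.prob_space)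
qed

lemma type2_bounds:
  assumes "T \<in> tests P0 n"
  shows "0 \<le> type2 P0 lam ph n T \<Delta> \<theta> Mc" "type2 P0 lam ph n T \<Delta> \<theta> Mc \<le> 1"
    and "P \<in> Palt P0 lam ph \<Delta> \<theta> Mc \<Longrightarrow>
         (\<integral>x. 1 - T x \<partial>PiM {..<n} (\<lambda>_. P)) \<le> type2 P0 lam ph n T \<Delta> \<theta> Mc"
proof -
  have le1: "y \<le> 1" if "y \<in> insert 0 ((\<lambda>P. \<integral>x. 1 - T x \<partial>PiM {..<n} (\<lambda>_. P)) ` Palt P0 lam ph \<Delta> \<theta> Mc)" for y
    using that integral_one_minus_test_bounds(2)[OF assms] by (auto simp: Palt_def)
  then have bdd: "bdd_above (insert 0 ((\<lambda>P. \<integral>x. 1 - T x \<partial>PiM {..<n} (\<lambda>_. P)) ` Palt P0 lam ph \<Delta> \<theta> Mc))"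
    by (intro bdd_aboveI) 
  show "0 \<le> type2 P0 lam ph n T \<Delta> \<theta> Mc" "P \<in> Palt P0 lam ph \<Delta> \<theta> Mc \<Longrightarrow>
      (\<integral>x. 1 - T x \<partial>PiM {..<n} (\<lambda>_. P)) \<le> type2 P0 lam ph n T \<Delta> \<theta> Mc"
    unfolding type2_def using bdd by (auto intro!: cSup_upper)
  show "type2 P0 lam ph n T \<Delta> \<theta> Mc \<le> 1"
    unfolding type2_def using le1 by (intro cSup_least) auto
qed

lemma test_risk_bounds:
  fixes \<Delta> :: "real \<Rightarrow> real"
  assumes T: "T \<in> tests P0 n" and th: "\<theta>1 \<le> \<theta>2"
  shows "0 \<le> (\<integral>x. T x \<partial>PiM {..<n} (\<lambda>_. P0)) + (SUP \<theta>\<in>{\<theta>1..\<theta>2}. type2 P0 lam ph n T (\<Delta> \<theta>) \<theta> Mc)"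
    and "(SUP \<theta>\<in>{\<theta>1..\<theta>2}. type2 P0 lam ph n T (\<Delta> \<theta>) \<theta> Mc) \<le> 1"
proof -
  have bdd: "bdd_above ((\<lambda>\<theta>. type2 P0 lam ph n T (\<Delta> \<theta>) \<theta> Mc) ` {\<theta>1..\<theta>2})"
    using type2_bounds(2)[OF T] by (intro bdd_aboveI[where M=1]) auto
  have "0 \<le> type2 P0 lam ph n T (\<Delta> \<theta>1) \<theta>1 Mc" by (rule type2_bounds(1)[OF T])
  also have "\<dots> \<le> (SUP \<theta>\<in>{\<theta>1..\<theta>2}. type2 P0 lam ph n T (\<Delta> \<theta>) \<theta> Mc)"
    using bdd th by (intro cSUP_upper) auto
  moreover have "0 \<le> (\<integral>x. T x \<partial>PiM {..<n} (\<lambda>_. P0))"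
    using T unfolding tests_def by (intro integral_nonneg_AE AE_I2) auto
  ultimately show "0 \<le> (\<integral>x. T x \<partial>PiM {..<n} (\<lambda>_. P0)) + (SUP \<theta>\<in>{\<theta>1..\<theta>2}. type2 P0 lam ph n T (\<Delta> \<theta>) \<theta> Mc)"
    by linarith
  show "(SUP \<theta>\<in>{\<theta>1..\<theta>2}. type2 P0 lam ph n T (\<Delta> \<theta>) \<theta> Mc) \<le> 1"
    using th type2_bounds(2)[OF T] by (intro cSUP_least) auto
qed

lemma minimax_risk_le_1:
  fixes \<Delta> :: "real \<Rightarrow> real"
  assumes "\<theta>1 \<le> \<theta>2"
  shows "(INF T\<in>tests P0 n. (\<integral>x. T x \<partial>PiM {..<n} (\<lambda>_. P0))
            + (SUP \<theta>\<in>{\<theta>1..\<theta>2}. type2 P0 lam ph n T (\<Delta> \<theta>) \<theta> Mc)) \<le> 1"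
proof -
  have zero: "(\<lambda>_. 0) \<in> tests P0 n" unfolding tests_def by auto
  have "(INF T\<in>tests P0 n. (\<integral>x. T x \<partial>PiM {..<n} (\<lambda>_. P0))
            + (SUP \<theta>\<in>{\<theta>1..\<theta>2}. type2 P0 lam ph n T (\<Delta> \<theta>) \<theta> Mc))
      \<le> (\<integral>x. 0 \<partial>PiM {..<n} (\<lambda>_. P0)) + (SUP \<theta>\<in>{\<theta>1..\<theta>2}. type2 P0 lam ph n (\<lambda>_. 0) (\<Delta> \<theta>) \<theta> Mc)"
    using test_risk_bounds(1)[OF _ assms] zero by (intro cINF_lower bdd_belowI2) auto
  also have "\<dots> \<le> 1" using test_risk_bounds(2)[OF zero assms] by simp
  finally show ?thesis .
qed

lemma ge_const_if_liminf_pos: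
  fixes f :: "nat \<Rightarrow> real"
  assumes pos: "\<And>k. 0 < f k" and li: "0 < liminf (\<lambda>k. ereal (f k))"
  shows "\<exists>c>0. \<forall>k. c \<le> f k"
proof -
  obtain y where y: "0 < y" "ereal y < liminf (\<lambda>k. ereal (f k))"
    using ereal_dense2[OF li] by auto
  then obtain K where K: "\<And>k. k \<ge> K \<Longrightarrow> y < f k"
    using less_LiminfD[OF y(2)] by (auto simp: eventually_sequentially)
  define c where "c = min y (Min (f ` {..K}))"
  have "0 < c" unfolding c_def using y(1) pos by (auto simp: Min_gr_iff)
  moreover have "c \<le> f k" for k
  proof (cases "k \<le> K")
    case True then show ?thesis unfolding c_def by (intro min.coboundedI2 Min_le) auto
  next
    case False then show ?thesis using K[of k] unfolding c_def by auto
  qed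
  ultimately show ?thesis by blast
qed

text \<open>With effective sample size N, the perturbation supported on a block of D eigenfunctions
  is least favourable for the smoothness index t determined by N^(4s/(4s+t+1)) = N / sqrt D.\<close>

definition block_smoothness :: "real \<Rightarrow> real \<Rightarrow> real \<Rightarrow> real" where
  "block_smoothness s N D = 4 * s / (1 - ln D / (2 * ln N)) - 4 * s - 1"

lemma block_smoothness_bounds:
  fixes s \<theta>1 \<theta>2 N D :: real
  assumes s: "0 < s" and th: "0 < \<theta>1" "\<theta>1 \<le> \<theta>2" and N: "1 < N"
    and D: "N powr (2 - 2 * (4 * s / (4 * s + \<theta>1 + 1))) \<le> D"
      "D \<le> N powr (2 - 2 * (4 * s / (4 * s + \<theta>2 + 1)))"
  shows "block_smoothness s N D \<in> {\<theta>1..\<theta>2}"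
    and "N powr (4 * s / (4 * s + block_smoothness s N D + 1)) = N / sqrt D"
proof -
  define \<alpha>1 where "\<alpha>1 = 4 * s / (4 * s + \<theta>1 + 1)"
  define \<alpha>2 where "\<alpha>2 = 4 * s / (4 * s + \<theta>2 + 1)"
  define \<alpha> where "\<alpha> = 1 - ln D / (2 * ln N)"
  define t where "t = block_smoothness s N D"
  have lN: "0 < ln N" using N by simp
  have D0: "0 < D" using D(1) N by (smt (verit) powr_gt_zero)
  have "ln (N powr (2 - 2 * \<alpha>1)) \<le> ln D" "ln D \<le> ln (N powr (2 - 2 * \<alpha>2))"
    using D D0 N by (subst ln_le_cancel_iff; simp add: \<alpha>1_def \<alpha>2_def)+
  then have "(2 - 2 * \<alpha>1) * ln N \<le> ln D" "ln D \<le> (2 - 2 * \<alpha>2) * ln N"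
    using N by (simp_all add: ln_powr)
  then have \<alpha>_range: "\<alpha>2 \<le> \<alpha>" "\<alpha> \<le> \<alpha>1"
    using lN by (simp_all add: \<alpha>_def divide_simps algebra_simps)
  have \<alpha>2_pos: "0 < \<alpha>2" using s th by (simp add: \<alpha>2_def)
  have t_eq: "4 * s + t + 1 = 4 * s / \<alpha>" by (simp add: t_def \<alpha>_def block_smoothness_def)
  have "4 * s / \<alpha>1 \<le> 4 * s / \<alpha>" "4 * s / \<alpha> \<le> 4 * s / \<alpha>2"
    using \<alpha>_range \<alpha>2_pos s by (auto intro!: divide_left_mono)
  moreover have "4 * s / \<alpha>1 = 4 * s + \<theta>1 + 1" "4 * s / \<alpha>2 = 4 * s + \<theta>2 + 1"
    using s th by (simp_all add: \<alpha>1_def \<alpha>2_def)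
  ultimately show "t \<in> {\<theta>1..\<theta>2}" using t_eq by simp
  have "4 * s / (4 * s + t + 1) = \<alpha>" unfolding t_eq using \<alpha>_range \<alpha>2_pos s by simp
  moreover have "N powr \<alpha> = N / sqrt D"
  proof -
    have "N powr \<alpha> = exp (ln N - ln D / 2)"
      using N lN by (simp add: powr_def \<alpha>_def field_simps)
    also have "\<dots> = N / sqrt D"
      using N D0 by (simp add: exp_diff powr_half_sqrt[symmetric] powr_def)
    finally show ?thesis .
  qed
  ultimately show "N powr (4 * s / (4 * s + t + 1)) = N / sqrt D" by simp
qed

text \<open>The L2 norm of the block perturbation is sqrt (Cb sqrt D / N) and its squared RKHS norm is
  at most that times (2D)^(2s) / cl; with the exponent relation of the block smoothness t the
  powers of N cancel, and the choice of Cb absorbs the remaining constants.\<close>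

lemma block_approximation_condition:
  fixes s t N D Cb cl Mc \<theta>1 \<theta>2 :: real
  assumes s: "0 < s" and N: "1 < N" and D: "0 < D" and Cb: "0 < Cb" "Cb \<le> 1"
    and cl: "0 < cl" and Mc: "0 < Mc" and th: "0 < \<theta>1" "\<theta>1 \<le> t" "t \<le> \<theta>2"
    and N_pow: "N powr (4 * s / (4 * s + t + 1)) = N / sqrt D"
    and Cb_small: "ln Cb \<le> (2 / (\<theta>1 + 1)) * (ln cl / 2 - s * ln 2 - \<theta>2 * \<bar>ln Mc\<bar>)"
  shows "sqrt (Cb * sqrt D / N) \<le> Mc * sqrt (Cb * sqrt D / N * (2 * D) powr (2 * s) / cl) powr (-1 / t)"
proof -
  define A where "A = 4 * s / (4 * s + t + 1)"
  define X where "X = ln Cb"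
  define lN where "lN = ln N"
  define Nb where "Nb = Cb * sqrt D / N * (2 * D) powr (2 * s) / cl"
  have t: "0 < t" using th by simp
  have tA: "(t + 1) * A = 4 * s * (1 - A)"
    using s t by (simp add: A_def field_simps)
  have lnD: "ln D = 2 * (1 - A) * lN"
  proof -
    have "A * lN = lN - ln D / 2"
      using arg_cong[OF N_pow, of ln] N D by (simp add: A_def lN_def ln_div ln_sqrt)
    then show ?thesis by (simp add: algebra_simps)
  qed
  have r_pos: "0 < Cb * sqrt D / N" using Cb D N by simp
  have ln_r: "ln (Cb * sqrt D / N) = X - A * lN"
  proof -
    have "ln (Cb * sqrt D / N) = ln Cb + ln D / 2 - ln N"
      using Cb D N by (simp add: ln_div ln_mult ln_sqrt)
    moreover have "ln D / 2 = lN - A * lN" using lnD by (simp add: algebra_simps)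
    ultimately show ?thesis unfolding X_def lN_def by linarith
  qed
  have Nb_pos: "0 < Nb" unfolding Nb_def
    by (rule divide_pos_pos[OF mult_pos_pos[OF r_pos]]) (use cl D in simp_all)
  have ln_Nb: "ln Nb = X - A * lN + 2 * s * (ln 2 + 2 * (1 - A) * lN) - ln cl"
  proof -
    have p: "0 < (2 * D) powr (2 * s)" using D by simp
    have "ln Nb = ln (Cb * sqrt D / N) + ln ((2 * D) powr (2 * s)) - ln cl"
      unfolding Nb_def using r_pos p cl by (simp only: ln_divide_pos ln_mult_pos mult_pos_pos)
    also have "ln ((2 * D) powr (2 * s)) = 2 * s * (ln 2 + ln D)"
      using D by (simp add: ln_mult_pos)
    finally show ?thesis unfolding ln_r lnD by simp
  qed
  have X0: "X \<le> 0" unfolding X_def using Cb by simp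
  have "(t + 1) * X \<le> (\<theta>1 + 1) * X"
    using X0 th by (intro mult_right_mono_neg) auto
  also have "\<dots> \<le> (\<theta>1 + 1) * ((2 / (\<theta>1 + 1)) * (ln cl / 2 - s * ln 2 - \<theta>2 * \<bar>ln Mc\<bar>))"
    using Cb_small th by (intro mult_left_mono) (auto simp: X_def)
  also have "\<dots> = ln cl - 2 * s * ln 2 - 2 * \<theta>2 * \<bar>ln Mc\<bar>"
    using th by (simp add: field_simps)
  finally have k1: "(t + 1) * X \<le> ln cl - 2 * s * ln 2 - 2 * \<theta>2 * \<bar>ln Mc\<bar>" .
  have k2: "- (\<theta>2 * \<bar>ln Mc\<bar>) \<le> t * ln Mc"
  proof -
    have "- (\<theta>2 * \<bar>ln Mc\<bar>) \<le> - (t * \<bar>ln Mc\<bar>)" using th by (simp add: mult_right_mono)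
    also have "\<dots> \<le> t * ln Mc" using t by (simp add: abs_if mult_right_mono_neg)
    finally show ?thesis .
  qed
  have "t * (X - A * lN) + ln Nb \<le> 2 * t * ln Mc"
  proof -
    have "t * (X - A * lN) + ln Nb
        = (t + 1) * X + 2 * s * ln 2 - ln cl + (4 * s * (1 - A) * lN - (t + 1) * A * lN)"
      unfolding ln_Nb by (simp add: algebra_simps)
    then show ?thesis using k1 k2 unfolding tA by simp
  qed
  then have "ln (sqrt (Cb * sqrt D / N)) \<le> ln (Mc * (sqrt Nb) powr (-1 / t))"
    using r_pos Nb_pos Mc t by (simp add: ln_sqrt ln_r ln_mult field_simps)
  moreover have "0 < sqrt (Cb * sqrt D / N)" "0 < Mc * sqrt Nb powr (-1 / t)"
    using r_pos Nb_pos Mc by simp_all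
  ultimately have "sqrt (Cb * sqrt D / N) \<le> Mc * sqrt Nb powr (-1 / t)"
    by (subst (asm) ln_le_cancel_iff)
  then show ?thesis by (simp only: Nb_def)
qed

lemma block_amplitude_bounds:
  fixes s \<theta>1 \<theta>2 N L D Cb Bp :: real and n :: nat
  assumes N: "1 < N" and L: "0 < L" and n: "real n = N * sqrt L" and Cb: "0 < Cb" and Bp: "1 \<le> Bp"
    and fine: "Cb * N powr (2 - 3 * (4 * s / (4 * s + \<theta>2 + 1))) * Bp^2 \<le> 1"
    and coarse: "Cb * sqrt L * N powr (4 * s / (4 * s + \<theta>1 + 1) - 1) \<le> 1"
    and D: "1 \<le> D" "N powr (2 - 2 * (4 * s / (4 * s + \<theta>1 + 1))) \<le> D"
      "D \<le> N powr (2 - 2 * (4 * s / (4 * s + \<theta>2 + 1)))"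
  defines "a \<equiv> sqrt (Cb / (N * sqrt D))"
  shows "0 < a" and "a^2 * D = Cb * sqrt D / N" and "a * D * Bp \<le> 1" and "a^2 * D \<le> 1"
    and "real n * a^2 \<le> 1" and "D * (real n * a^2)^2 = Cb^2 * L"
proof -
  define \<alpha>1 where "\<alpha>1 = 4 * s / (4 * s + \<theta>1 + 1)"
  define \<alpha>2 where "\<alpha>2 = 4 * s / (4 * s + \<theta>2 + 1)"
  have sD_pos: "0 < sqrt D" using D(1) by simp
  have root: "sqrt (N powr (2 - 2 * x)) = N powr (1 - x)" for x
  proof -
    have "sqrt (N powr (2 - 2 * x)) = N powr ((2 - 2 * x) / 2)"
      using N by (simp add: powr_half_sqrt_powr)
    also have "(2 - 2 * x) / 2 = 1 - x" by simp
    finally show ?thesis .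
  qed
  have sqrt_D: "N powr (1 - \<alpha>1) \<le> sqrt D" "sqrt D \<le> N powr (1 - \<alpha>2)"
    using D(2,3) root[of \<alpha>1] root[of \<alpha>2] unfolding \<alpha>1_def \<alpha>2_def by (metis real_sqrt_le_mono)+
  show a_pos: "0 < a" unfolding a_def using Cb N D(1) by simp
  have a_sq: "a^2 = Cb / (N * sqrt D)" unfolding a_def using Cb N D(1) by simp
  show a_sq_D: "a^2 * D = Cb * sqrt D / N"
  proof -
    have "a^2 * D = Cb / (N * sqrt D) * (sqrt D * sqrt D)" using a_sq D(1) by simp
    also have "\<dots> = Cb * sqrt D / N" using sD_pos N by (simp add: field_simps)
    finally show ?thesis .
  qed
  have a_D_Bp_sq: "(a * D * Bp)^2 \<le> 1"
  proof -
    have "(a * D * Bp)^2 = Cb * (sqrt D * D) / N * Bp^2"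
      using a_sq_D by (simp add: power_mult_distrib power2_eq_square mult_ac)
    also have "\<dots> \<le> Cb * (N powr (1 - \<alpha>2) * N powr (2 - 2 * \<alpha>2)) / N * Bp^2"
      using sqrt_D D sD_pos Cb N
      by (intro mult_right_mono divide_right_mono mult_left_mono mult_mono) (auto simp: \<alpha>2_def)
    also have "N powr (1 - \<alpha>2) * N powr (2 - 2 * \<alpha>2) = N powr (2 - 3 * \<alpha>2) * N"
    proof -
      have "N powr (1 - \<alpha>2) * N powr (2 - 2 * \<alpha>2) = N powr ((2 - 3 * \<alpha>2) + 1)"
        by (simp add: powr_add[symmetric])
      then show ?thesis using N by (simp only: powr_add powr_one)
    qed
    also have "Cb * (N powr (2 - 3 * \<alpha>2) * N) / N * Bp^2 \<le> 1"
      using fine N by (simp add: \<alpha>2_def)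
    finally show ?thesis .
  qed
  then show a_D_Bp: "a * D * Bp \<le> 1"
    using a_pos D(1) Bp by (simp add: abs_square_le_1)
  have "a^2 * D \<le> (a * D * Bp)^2"
  proof -
    have "1 \<le> D * Bp^2" using D(1) Bp by (metis mult_mono' one_le_power mult_1 zero_le_one)
    then have "a^2 * D * 1 \<le> a^2 * D * (D * Bp^2)" using D(1) by (intro mult_left_mono) auto
    then show ?thesis by (simp add: power_mult_distrib power2_eq_square mult_ac)
  qed
  then show "a^2 * D \<le> 1" using a_D_Bp_sq by linarith
  have n_a_sq: "real n * a^2 = Cb * sqrt L / sqrt D"
    unfolding n a_sq using N sD_pos by (simp add: field_simps)
  show "real n * a^2 \<le> 1"
  proof -
    have "Cb * sqrt L / sqrt D \<le> Cb * sqrt L / N powr (1 - \<alpha>1)"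
      using sqrt_D(1) Cb L N sD_pos by (intro divide_left_mono) auto
    also have "\<dots> = Cb * sqrt L * N powr (\<alpha>1 - 1)"
      using N by (simp add: powr_minus[symmetric] divide_inverse)
    also have "\<dots> \<le> 1" using coarse unfolding \<alpha>1_def .
    finally show ?thesis unfolding n_a_sq .
  qed
  show "D * (real n * a^2)^2 = Cb^2 * L"
    unfolding n_a_sq using L D(1) by (simp add: power_divide power_mult_distrib)
qed

lemma sum_sq_div_eigenvalues_le:
  fixes lam :: "nat \<Rightarrow> real" and B :: "nat set"
  assumes lam: "\<And>k. 0 < lam k" and cl: "0 < cl" "\<And>k. cl \<le> real (Suc k) powr (2 * s) * lam k"
    and s: "0 < s" and B: "\<And>k. k \<in> B \<Longrightarrow> real (Suc k) \<le> 2 * real (card B)"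
  shows "(\<Sum>k\<in>B. c^2 / lam k) \<le> c^2 * real (card B) * (2 * real (card B)) powr (2 * s) / cl"
proof -
  have "(\<Sum>k\<in>B. c^2 / lam k) \<le> (\<Sum>k\<in>B. c^2 * ((2 * real (card B)) powr (2 * s) / cl))"
  proof (intro sum_mono)
    fix k assume "k \<in> B"
    then have "real (Suc k) powr (2 * s) \<le> (2 * real (card B)) powr (2 * s)"
      using B s by (intro powr_mono2) auto
    moreover have "1 / lam k \<le> real (Suc k) powr (2 * s) / cl"
      using cl(2)[of k] lam[of k] cl(1) by (simp add: divide_simps mult.commute)
    ultimately have "1 / lam k \<le> (2 * real (card B)) powr (2 * s) / cl"
      using cl(1) by (smt (verit) divide_right_mono)
    then show "c^2 / lam k \<le> c^2 * ((2 * real (card B)) powr (2 * s) / cl)"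
      by (metis divide_inverse inverse_eq_divide mult_left_mono zero_le_power2)
  qed
  then show ?thesis by (simp add: mult_ac)
qed

context bounded_orthonormal_system
begin

lemma block_perturbation_properties:
  fixes lam :: "nat \<Rightarrow> real" and \<Delta> :: "real \<Rightarrow> real" and B :: "nat set" and n :: nat
  assumes lam: "\<And>k. 0 < lam k" and cl: "0 < cl" "\<And>k. cl \<le> real (Suc k) powr (2 * s) * lam k"
    and s: "0 < s" and Mc: "0 < Mc" and th: "0 < \<theta>1" "\<theta>1 \<le> \<theta>2" and Bp: "1 \<le> Bp"
    and N: "1 < N" and L: "0 < L" and n: "real n = N * sqrt L"
    and Cb: "0 < Cb" "Cb \<le> 1" "ln Cb \<le> (2 / (\<theta>1 + 1)) * (ln cl / 2 - s * ln 2 - \<theta>2 * \<bar>ln Mc\<bar>)"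
    and Delta: "\<And>\<theta>. \<theta> \<in> {\<theta>1..\<theta>2} \<Longrightarrow> \<Delta> \<theta> * N powr (4 * s / (4 * s + \<theta> + 1)) \<le> Cb"
    and fine: "Cb * N powr (2 - 3 * (4 * s / (4 * s + \<theta>2 + 1))) * Bp^2 \<le> 1"
    and coarse: "Cb * sqrt L * N powr (4 * s / (4 * s + \<theta>1 + 1) - 1) \<le> 1"
    and B: "finite B" "B \<noteq> {}" "\<And>k. k \<in> B \<Longrightarrow> real (Suc k) \<le> 2 * real (card B)"
    and D: "N powr (2 - 2 * (4 * s / (4 * s + \<theta>1 + 1))) \<le> real (card B)"
      "real (card B) \<le> N powr (2 - 2 * (4 * s / (4 * s + \<theta>2 + 1)))"
  defines "a \<equiv> sqrt (Cb / (N * sqrt (real (card B))))" and "t \<equiv> block_smoothness s N (real (card B))"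
  shows "t \<in> {\<theta>1..\<theta>2}" and "\<bar>a\<bar> * real (card B) * Bp \<le> 1" and "a^2 * real (card B) \<le> 1"
    and "real n * a^2 \<le> 1" and "real (card B) * (real n * a^2)^2 = Cb^2 * L"
    and "\<And>\<xi>. (\<And>k. k \<in> B \<Longrightarrow> \<xi> k \<in> {-1,1}) \<Longrightarrow>
      density P0 (\<lambda>x. ennreal (1 + sign_perturbation ph a B \<xi> x)) \<in> Palt P0 lam ph (\<Delta> t) t Mc"
proof -
  define D where "D = real (card B)"
  have D1: "1 \<le> D" using B(1,2) by (simp add: D_def Suc_leI card_gt_0_iff)
  note t_props = block_smoothness_bounds[OF s th N D, folded t_def D_def]
  note amp = block_amplitude_bounds[OF N L n Cb(1) Bp fine coarse D1 D[folded D_def],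
      unfolded D_def, folded a_def]
  show "t \<in> {\<theta>1..\<theta>2}" by (fact t_props(1))
  show small: "\<bar>a\<bar> * real (card B) * Bp \<le> 1" using amp(1,3) by simp
  show "a^2 * real (card B) \<le> 1" "real n * a^2 \<le> 1" "real (card B) * (real n * a^2)^2 = Cb^2 * L"
    by (fact amp(4-6))+
  fix \<xi> :: "nat \<Rightarrow> real" assume signs: "\<And>k. k \<in> B \<Longrightarrow> \<xi> k \<in> {-1,1}"
  define Nb where "Nb = Cb * sqrt D / N * (2 * D) powr (2 * s) / cl"
  have Nb: "(\<Sum>k\<in>B. a^2 / lam k) \<le> Nb"
    using sum_sq_div_eigenvalues_le[OF lam cl s B(3), of a] amp(2) by (simp add: Nb_def D_def)
  have approx: "sqrt (a^2 * real (card B)) \<le> Mc * sqrt Nb powr (-1 / t)"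
    using block_approximation_condition[OF s N _ Cb(1,2) cl(1) Mc th(1) _ _ t_props(2) Cb(3)]
      t_props(1) D1 amp(2) by (simp add: Nb_def D_def)
  have "\<Delta> t * (N / sqrt D) \<le> Cb" using Delta[OF t_props(1)] t_props(2) by simp
  then have "\<Delta> t \<le> Cb * sqrt D / N" using N D1 by (simp add: field_simps)
  then have "\<Delta> t \<le> a^2 * real (card B)" using amp(2) by (simp add: D_def)
  then show "density P0 (\<lambda>x. ennreal (1 + sign_perturbation ph a B \<xi> x)) \<in> Palt P0 lam ph (\<Delta> t) t Mc"
    using amp(1) t_props(1) th
    by (intro sign_perturbation_density_in_Palt[OF B(1,2) signs small _ lam Nb _ Mc approx]) auto
qed


text \<open>Each alternative of the prior picks a block j uniformly from J and independent uniform signs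
  on the eigenfunctions of that block. Perturbations from different blocks are orthogonal, so only
  the pairs within one block contribute to the chi-square divergence of the mixture.\<close>

lemma sign_mixture_chi2_bound:
  fixes n :: nat and J :: "nat set" and Bl :: "nat \<Rightarrow> nat set" and a :: "nat \<Rightarrow> real"
  assumes J: "finite J" "J \<noteq> {}"
    and Bl: "\<And>j. j \<in> J \<Longrightarrow> finite (Bl j)"
      "\<And>j j'. j \<in> J \<Longrightarrow> j' \<in> J \<Longrightarrow> j \<noteq> j' \<Longrightarrow> Bl j \<inter> Bl j' = {}"
    and small: "\<And>j. j \<in> J \<Longrightarrow> \<bar>a j\<bar> * real (card (Bl j)) * Bp \<le> 1"
    and amp: "\<And>j. j \<in> J \<Longrightarrow> (a j)^2 * real (card (Bl j)) \<le> 1" "\<And>j. j \<in> J \<Longrightarrow> real n * (a j)^2 \<le> 1"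
    and V: "\<And>j. j \<in> J \<Longrightarrow> real (card (Bl j)) * (real n * (a j)^2)^2 \<le> V"
  defines "Pj \<equiv> \<lambda>j. PiE (Bl j) (\<lambda>_. {-1, 1::real})" and "q \<equiv> \<lambda>j. 1 / 2 ^ card (Bl j) :: real"
  shows "(\<Sum>s\<in>Sigma J Pj. \<Sum>s'\<in>Sigma J Pj. (q (fst s) / card J) * (q (fst s') / card J) *
      (1 + (\<integral>x. sign_perturbation ph (a (fst s)) (Bl (fst s)) (snd s) x
        * sign_perturbation ph (a (fst s')) (Bl (fst s')) (snd s') x \<partial>P0))^n)
    \<le> exp V / card J + (real (card J) - 1) / card J"
proof (rule block_mixture_chi2_bound[OF J])
  have Pj_signs: "\<And>k. k \<in> Bl j \<Longrightarrow> \<xi> k \<in> {-1,1}" if "\<xi> \<in> Pj j" for j \<xi>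
    using that unfolding Pj_def by (auto simp: PiE_def Pi_def)
  show "finite (Pj j)" if "j \<in> J" for j unfolding Pj_def using Bl(1)[OF that] by (simp add: finite_PiE)
  show "(\<Sum>\<xi>\<in>Pj j. q j) = 1" if "j \<in> J" for j
    unfolding q_def Pj_def using Bl(1)[OF that] by (simp add: card_PiE)
  fix j assume j: "j \<in> J"
  {
    fix j' \<xi> \<xi>' assume jj: "j' \<in> J" "j \<noteq> j'" "\<xi> \<in> Pj j" "\<xi>' \<in> Pj j'"
    show "(1 + (\<integral>x. sign_perturbation ph (a j) (Bl j) \<xi> x * sign_perturbation ph (a j') (Bl j') \<xi>' x \<partial>P0))^n = 1"
      using integral_sign_perturbation_mult[OF Bl(1)[OF j] Pj_signs[OF jj(3)] small[OF j]
          Bl(1)[OF jj(1)] Pj_signs[OF jj(4)] small[OF jj(1)]] Bl(2)[OF j jj(1,2)] by simp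
  }
  have "(1 + (\<integral>x. sign_perturbation ph (a j) (Bl j) \<xi> x * sign_perturbation ph (a j) (Bl j) \<xi>' x \<partial>P0))^n
      = (1 + (a j)^2 * (\<Sum>k\<in>Bl j. \<xi> k * \<xi>' k))^n" if "\<xi> \<in> Pj j" "\<xi>' \<in> Pj j" for \<xi> \<xi>'
    using integral_sign_perturbation_mult[OF Bl(1)[OF j] Pj_signs[OF that(1)]
        small[OF j] Bl(1)[OF j] Pj_signs[OF that(2)] small[OF j]] by (simp add: power2_eq_square)
  then have "(\<Sum>\<xi>\<in>Pj j. \<Sum>\<xi>'\<in>Pj j. q j * q j *
        (1 + (\<integral>x. sign_perturbation ph (a j) (Bl j) \<xi> x * sign_perturbation ph (a j) (Bl j) \<xi>' x \<partial>P0))^n)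
      = (\<Sum>\<xi>\<in>Pj j. \<Sum>\<xi>'\<in>Pj j. (1 / 2 ^ card (Bl j)) * (1 / 2 ^ card (Bl j))
          * (1 + (a j)^2 * (\<Sum>k\<in>Bl j. \<xi> k * \<xi>' k))^n)"
    by (simp add: q_def)
  also have "\<dots> \<le> exp (real (card (Bl j)) * (real n * (a j)^2)^2)"
    unfolding Pj_def using amp j by (intro rademacher_chi2_bound Bl(1))
  also have "\<dots> \<le> exp V" using V[OF j] by simp
  finally show "(\<Sum>\<xi>\<in>Pj j. \<Sum>\<xi>'\<in>Pj j. q j * q j *
      (1 + (\<integral>x. sign_perturbation ph (a j) (Bl j) \<xi> x * sign_perturbation ph (a j) (Bl j) \<xi>' x \<partial>P0))^n)
    \<le> exp V" .
qed

lemma sign_mixture_risk_lower_bound: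
  fixes lam :: "nat \<Rightarrow> real" and \<Delta> :: "real \<Rightarrow> real" and n :: nat and J :: "nat set"
    and Bl :: "nat \<Rightarrow> nat set" and a t :: "nat \<Rightarrow> real"
  assumes J: "finite J" "J \<noteq> {}"
    and Bl: "\<And>j. j \<in> J \<Longrightarrow> finite (Bl j)"
      "\<And>j j'. j \<in> J \<Longrightarrow> j' \<in> J \<Longrightarrow> j \<noteq> j' \<Longrightarrow> Bl j \<inter> Bl j' = {}"
    and small: "\<And>j. j \<in> J \<Longrightarrow> \<bar>a j\<bar> * real (card (Bl j)) * Bp \<le> 1"
    and amp: "\<And>j. j \<in> J \<Longrightarrow> (a j)^2 * real (card (Bl j)) \<le> 1" "\<And>j. j \<in> J \<Longrightarrow> real n * (a j)^2 \<le> 1"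
    and V: "\<And>j. j \<in> J \<Longrightarrow> real (card (Bl j)) * (real n * (a j)^2)^2 \<le> V"
    and t: "\<And>j. j \<in> J \<Longrightarrow> t j \<in> {\<theta>1..\<theta>2}"
    and alt: "\<And>j \<xi>. j \<in> J \<Longrightarrow> (\<And>k. k \<in> Bl j \<Longrightarrow> \<xi> k \<in> {-1,1}) \<Longrightarrow>
      density P0 (\<lambda>x. ennreal (1 + sign_perturbation ph (a j) (Bl j) \<xi> x)) \<in> Palt P0 lam ph (\<Delta> (t j)) (t j) Mc"
    and T: "T \<in> tests P0 n"
  shows "1 - sqrt ((exp V - 1) / card J)
     \<le> (\<integral>x. T x \<partial>PiM {..<n} (\<lambda>_. P0)) + (SUP \<theta>\<in>{\<theta>1..\<theta>2}. type2 P0 lam ph n T (\<Delta> \<theta>) \<theta> Mc)"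
proof -
  define Pj where "Pj j = PiE (Bl j) (\<lambda>_. {-1,1::real})" for j
  define S where "S = Sigma J Pj"
  define w where "w st = 1 / 2 ^ card (Bl (fst st)) / real (card J)" for st :: "nat \<times> (nat \<Rightarrow> real)"
  define u where "u st = sign_perturbation ph (a (fst st)) (Bl (fst st)) (snd st)" for st
  have card_J: "0 < card J" using J by (simp add: card_gt_0_iff)
  have Pj_fin: "finite (Pj j)" if "j \<in> J" for j unfolding Pj_def using Bl(1)[OF that] by (simp add: finite_PiE)
  have Pj_signs: "\<And>k. k \<in> Bl j \<Longrightarrow> \<xi> k \<in> {-1,1}" if "\<xi> \<in> Pj j" for j \<xi>
    using that unfolding Pj_def by (auto simp: PiE_def Pi_def)
  have w_sum: "sum w S = 1"
  proof -
    have "(\<Sum>\<xi>\<in>Pj j. w (j, \<xi>)) = 1 / card J" if "j \<in> J" for j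
      unfolding Pj_def w_def using Bl(1)[OF that] by (simp add: card_PiE)
    then have "sum w S = (\<Sum>j\<in>J. 1 / card J)"
      unfolding S_def using J Pj_fin by (simp add: sum_Sigma_split)
    then show ?thesis using card_J by simp
  qed
  have w_nonneg: "0 \<le> w st" for st by (simp add: w_def)
  have S_fin: "finite S" unfolding S_def using J Pj_fin by simp
  have u_props: "u st \<in> borel_measurable P0" "\<And>x. \<bar>u st x\<bar> \<le> 1" "(\<integral>x. u st x \<partial>P0) = 0"
    if "st \<in> S" for st
  proof -
    have j: "fst st \<in> J" and \<xi>: "snd st \<in> Pj (fst st)" using that by (auto simp: S_def)
    show "u st \<in> borel_measurable P0" "\<And>x. \<bar>u st x\<bar> \<le> 1"
      unfolding u_def by (auto intro: abs_sign_perturbation_le)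
    show "(\<integral>x. u st x \<partial>P0) = 0"
      unfolding u_def by (rule integral_sign_perturbation[OF Bl(1)[OF j] Pj_signs[OF \<xi>] small[OF j]])
  qed
  have "1 - sqrt ((\<Sum>s\<in>S. \<Sum>s'\<in>S. w s * w s' * (1 + (\<integral>x. u s x * u s' x \<partial>P0))^n) - 1)
         \<le> (\<integral>x. T x \<partial>PiM {..<n} (\<lambda>_. P0)) +
            (\<Sum>s\<in>S. w s * (\<integral>x. 1 - T x \<partial>PiM {..<n} (\<lambda>_. density P0 (\<lambda>x. ennreal (1 + u s x)))))"
    using T u_props unfolding tests_def
    by (intro mixture_test_risk_lower_bound prob_space_P0 S_fin w_nonneg w_sum) auto
  moreover have "(\<Sum>s\<in>S. \<Sum>s'\<in>S. w s * w s' * (1 + (\<integral>x. u s x * u s' x \<partial>P0))^n)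
      \<le> exp V / card J + (real (card J) - 1) / card J"
    using sign_mixture_chi2_bound[OF J Bl small amp V] unfolding S_def w_def u_def Pj_def by simp
  then have "sqrt ((\<Sum>s\<in>S. \<Sum>s'\<in>S. w s * w s' * (1 + (\<integral>x. u s x * u s' x \<partial>P0))^n) - 1)
      \<le> sqrt ((exp V - 1) / card J)"
    using card_J by (intro real_sqrt_le_mono) (simp add: field_simps)
  moreover have "(\<Sum>s\<in>S. w s * (\<integral>x. 1 - T x \<partial>PiM {..<n} (\<lambda>_. density P0 (\<lambda>x. ennreal (1 + u s x)))))
      \<le> (SUP \<theta>\<in>{\<theta>1..\<theta>2}. type2 P0 lam ph n T (\<Delta> \<theta>) \<theta> Mc)"
  proof -
    have bdd: "bdd_above ((\<lambda>\<theta>. type2 P0 lam ph n T (\<Delta> \<theta>) \<theta> Mc) ` {\<theta>1..\<theta>2})"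
      using type2_bounds(2)[OF T] by (intro bdd_aboveI[where M=1]) auto
    have "(\<integral>x. 1 - T x \<partial>PiM {..<n} (\<lambda>_. density P0 (\<lambda>x. ennreal (1 + u st x))))
        \<le> (SUP \<theta>\<in>{\<theta>1..\<theta>2}. type2 P0 lam ph n T (\<Delta> \<theta>) \<theta> Mc)" if "st \<in> S" for st
    proof -
      have j: "fst st \<in> J" and \<xi>: "snd st \<in> Pj (fst st)" using that by (auto simp: S_def)
      have "(\<integral>x. 1 - T x \<partial>PiM {..<n} (\<lambda>_. density P0 (\<lambda>x. ennreal (1 + u st x))))
          \<le> type2 P0 lam ph n T (\<Delta> (t (fst st))) (t (fst st)) Mc"
        unfolding u_def using alt[OF j Pj_signs[OF \<xi>]] by (intro type2_bounds(3)[OF T])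
      also have "\<dots> \<le> (SUP \<theta>\<in>{\<theta>1..\<theta>2}. type2 P0 lam ph n T (\<Delta> \<theta>) \<theta> Mc)"
        using t[OF j] bdd by (intro cSUP_upper)
      finally show ?thesis .
    qed
    then have "(\<Sum>s\<in>S. w s * (\<integral>x. 1 - T x \<partial>PiM {..<n} (\<lambda>_. density P0 (\<lambda>x. ennreal (1 + u s x)))))
        \<le> (\<Sum>s\<in>S. w s * (SUP \<theta>\<in>{\<theta>1..\<theta>2}. type2 P0 lam ph n T (\<Delta> \<theta>) \<theta> Mc))"
      by (intro sum_mono mult_left_mono w_nonneg)
    also have "\<dots> = (SUP \<theta>\<in>{\<theta>1..\<theta>2}. type2 P0 lam ph n T (\<Delta> \<theta>) \<theta> Mc)"
      using w_sum by (simp add: sum_distrib_right[symmetric])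
    finally show ?thesis .
  qed
  ultimately show ?thesis by linarith
qed

end

lemma finite_dyadic_le: "finite {j::nat. P j \<and> 2 ^ j \<le> (hi::real)}"
proof (rule finite_subset)
  show "{j::nat. P j \<and> 2 ^ j \<le> hi} \<subseteq> {..nat \<lceil>hi\<rceil>}"
  proof
    fix j assume "j \<in> {j::nat. P j \<and> 2 ^ j \<le> hi}"
    then have "2 ^ j \<le> hi" by simp
    moreover have "real j < 2 ^ j" using less_exp[of j] by (metis of_nat_less_iff of_nat_numeral of_nat_power)
    ultimately have "int j \<le> \<lceil>hi\<rceil>" by linarith
    then show "j \<in> {..nat \<lceil>hi\<rceil>}" by simp
  qed
qed simp

lemma card_dyadic_between_ge:
  fixes lo hi :: real
  assumes lo: "1 \<le> lo" and hi: "0 < hi"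
  shows "log 2 hi - log 2 lo - 1 \<le> real (card {j::nat. lo \<le> 2 ^ j \<and> 2 ^ j \<le> hi})"
proof (cases "log 2 hi - log 2 lo - 1 \<le> 0")
  case False
  define a where "a = nat \<lceil>log 2 lo\<rceil>"
  define b where "b = nat \<lfloor>log 2 hi\<rfloor>"
  have log_lo: "0 \<le> log 2 lo" using lo by simp
  have a: "real a = \<lceil>log 2 lo\<rceil>" unfolding a_def using log_lo by simp
  have b: "real b = \<lfloor>log 2 hi\<rfloor>" unfolding b_def using False log_lo by simp
  have "{a..b} \<subseteq> {j::nat. lo \<le> 2 ^ j \<and> 2 ^ j \<le> hi}"
  proof
    fix j assume j: "j \<in> {a..b}"
    have "log 2 lo \<le> real j" "real j \<le> log 2 hi"
      using j a b by (smt (verit) atLeastAtMost_iff ceiling_correct of_int_floor_le of_nat_le_iff)+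
    then have "2 powr log 2 lo \<le> 2 powr real j" "2 powr real j \<le> 2 powr log 2 hi" by simp_all
    then show "j \<in> {j::nat. lo \<le> 2 ^ j \<and> 2 ^ j \<le> hi}" using lo hi by (simp add: powr_realpow)
  qed
  then have "card {a..b} \<le> card {j::nat. lo \<le> 2 ^ j \<and> 2 ^ j \<le> hi}"
    by (intro card_mono finite_dyadic_le)
  moreover have "log 2 hi - log 2 lo - 1 \<le> real (card {a..b})"
  proof -
    have "real b + 1 - real a \<le> real (card {a..b})" by simp
    then show ?thesis using a b by linarith
  qed
  ultimately show ?thesis by linarith
qed simp

context bounded_orthonormal_system
begin

lemma dyadic_sign_mixture_risk_lower_bound:
  fixes lam :: "nat \<Rightarrow> real" and \<Delta> :: "real \<Rightarrow> real" and n :: nat and J :: "nat set"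
  assumes lam: "\<And>k. 0 < lam k" and cl: "0 < cl" "\<And>k. cl \<le> real (Suc k) powr (2 * s) * lam k"
    and s: "0 < s" and Mc: "0 < Mc" and th: "0 < \<theta>1" "\<theta>1 \<le> \<theta>2" and Bp: "1 \<le> Bp"
    and N: "1 < N" and L: "0 < L" and n: "real n = N * sqrt L"
    and Cb: "0 < Cb" "Cb \<le> 1" "ln Cb \<le> (2 / (\<theta>1 + 1)) * (ln cl / 2 - s * ln 2 - \<theta>2 * \<bar>ln Mc\<bar>)"
    and Delta: "\<And>\<theta>. \<theta> \<in> {\<theta>1..\<theta>2} \<Longrightarrow> \<Delta> \<theta> * N powr (4 * s / (4 * s + \<theta> + 1)) \<le> Cb"
    and fine: "Cb * N powr (2 - 3 * (4 * s / (4 * s + \<theta>2 + 1))) * Bp^2 \<le> 1"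
    and coarse: "Cb * sqrt L * N powr (4 * s / (4 * s + \<theta>1 + 1) - 1) \<le> 1"
    and J: "J = {j. N powr (2 - 2 * (4 * s / (4 * s + \<theta>1 + 1))) \<le> 2 ^ j \<and>
                    2 ^ j \<le> N powr (2 - 2 * (4 * s / (4 * s + \<theta>2 + 1)))}" "J \<noteq> {}"
    and T: "T \<in> tests P0 n"
  shows "1 - sqrt ((exp (Cb^2 * L) - 1) / card J)
     \<le> (\<integral>x. T x \<partial>PiM {..<n} (\<lambda>_. P0)) + (SUP \<theta>\<in>{\<theta>1..\<theta>2}. type2 P0 lam ph n T (\<Delta> \<theta>) \<theta> Mc)"
proof -
  define Bl where "Bl j = {2 ^ j ..< 2 ^ Suc j :: nat}" for j
  define a where "a j = sqrt (Cb / (N * sqrt (real (card (Bl j)))))" for j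
  define t where "t j = block_smoothness s N (real (card (Bl j)))" for j
  have card_Bl: "card (Bl j) = 2 ^ j" for j by (simp add: Bl_def)
  have Bl_disjoint: "Bl j \<inter> Bl j' = {}" if "j \<noteq> j'" for j j'
  proof -
    have "2 ^ Suc j \<le> (2::nat) ^ j'" if "j < j'" for j j' :: nat
      using that by (intro power_increasing) auto
    then show ?thesis using \<open>j \<noteq> j'\<close> unfolding Bl_def by (cases "j < j'") (auto simp: not_less)
  qed
  have Bl_range: "real (Suc k) \<le> 2 * real (card (Bl j))" if "k \<in> Bl j" for j k
  proof -
    have "Suc k \<le> 2 * 2 ^ j" using that by (simp add: Bl_def)
    then show ?thesis unfolding card_Bl by (metis of_nat_le_iff of_nat_mult of_nat_numeral of_nat_power)
  qed
  note block = block_perturbation_properties[OF lam cl s Mc th Bp N L n Cb Delta fine coarse,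
      where B="Bl j" for j, folded a_def t_def]
  have block_props: "t j \<in> {\<theta>1..\<theta>2}" "\<bar>a j\<bar> * real (card (Bl j)) * Bp \<le> 1"
      "(a j)^2 * real (card (Bl j)) \<le> 1" "real n * (a j)^2 \<le> 1"
      "real (card (Bl j)) * (real n * (a j)^2)^2 = Cb^2 * L" if "j \<in> J" for j
    using block[of j] that Bl_range unfolding J card_Bl by (auto simp: Bl_def)
  show ?thesis
  proof (rule sign_mixture_risk_lower_bound[OF _ J(2) _ Bl_disjoint])
    show "finite J" unfolding J by (rule finite_dyadic_le)
    show "density P0 (\<lambda>x. ennreal (1 + sign_perturbation ph (a j) (Bl j) \<xi> x))
        \<in> Palt P0 lam ph (\<Delta> (t j)) (t j) Mc" if "j \<in> J" "\<And>k. k \<in> Bl j \<Longrightarrow> \<xi> k \<in> {-1,1}" for j \<xi>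
      using block(6)[of j \<xi>] that Bl_range unfolding J card_Bl by (auto simp: Bl_def)
  qed (use block_props T in \<open>auto simp: Bl_def\<close>)
qed

end

lemma tendsto_n_over_sqrt_lnln_powr_neg:
  "(b::real) < 0 \<Longrightarrow> ((\<lambda>n::nat. (real n / sqrt (ln (ln (real n)))) powr b) \<longlongrightarrow> 0) at_top"
  by real_asymp

lemma tendsto_sqrt_lnln_mult_powr:
  "(a::real) < 1 \<Longrightarrow>
    ((\<lambda>n::nat. sqrt (ln (ln (real n))) * (real n / sqrt (ln (ln (real n)))) powr (a - 1)) \<longlongrightarrow> 0) at_top"
  by real_asymp

lemma tendsto_exp_lnln_over_log:
  "0 < (k::real) \<Longrightarrow>
    ((\<lambda>n::nat. exp (ln (ln (real n)) / 4) / (k * log 2 (real n / sqrt (ln (ln (real n)))) - 1)) \<longlongrightarrow> 0) at_top"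
  by real_asymp

lemma filterlim_n_over_sqrt_lnln: "filterlim (\<lambda>n::nat. real n / sqrt (ln (ln (real n)))) at_top at_top"
  by real_asymp

lemma filterlim_lnln: "filterlim (\<lambda>n::nat. ln (ln (real n))) at_top at_top"
  by real_asymp

lemma filterlim_log_n_over_sqrt_lnln:
  "0 < (k::real) \<Longrightarrow> filterlim (\<lambda>n::nat. k * log 2 (real n / sqrt (ln (ln (real n)))) - 1) at_top at_top"
  by real_asymp

lemma eventually_le_if_limsup_SUP_less:
  fixes F :: "nat \<Rightarrow> 'b \<Rightarrow> real"
  assumes "limsup (\<lambda>n. SUP \<theta>\<in>A. ereal (F n \<theta>)) < ereal c"
  shows "eventually (\<lambda>n. \<forall>\<theta>\<in>A. F n \<theta> \<le> c) sequentially"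
  using Limsup_lessD[OF assms]
proof eventually_elim
  case (elim n)
  then show ?case by (meson SUP_upper ereal_less_eq(3) le_less_trans less_imp_le)
qed

context bounded_orthonormal_system
begin

lemma minimax_risk_ge:
  fixes lam :: "nat \<Rightarrow> real" and \<Delta> :: "real \<Rightarrow> real" and n :: nat
  assumes lam: "\<And>k. 0 < lam k" and cl: "0 < cl" "\<And>k. cl \<le> real (Suc k) powr (2 * s) * lam k"
    and s: "0 < s" and Mc: "0 < Mc" and th: "0 < \<theta>1" "\<theta>1 \<le> \<theta>2" and Bp: "1 \<le> Bp"
    and N: "1 < N" and L: "0 < L" and n: "real n = N * sqrt L"
    and Cb: "0 < Cb" "Cb \<le> 1/2" "ln Cb \<le> (2 / (\<theta>1 + 1)) * (ln cl / 2 - s * ln 2 - \<theta>2 * \<bar>ln Mc\<bar>)"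
    and Delta: "\<And>\<theta>. \<theta> \<in> {\<theta>1..\<theta>2} \<Longrightarrow> \<Delta> \<theta> * N powr (4 * s / (4 * s + \<theta> + 1)) \<le> Cb"
    and fine: "Cb * N powr (2 - 3 * (4 * s / (4 * s + \<theta>2 + 1))) * Bp^2 \<le> 1"
    and coarse: "Cb * sqrt L * N powr (4 * s / (4 * s + \<theta>1 + 1) - 1) \<le> 1"
  defines "\<kappa> \<equiv> 2 * (4 * s / (4 * s + \<theta>1 + 1)) - 2 * (4 * s / (4 * s + \<theta>2 + 1))"
  assumes many_blocks: "0 < \<kappa> * log 2 N - 1"
  shows "1 - sqrt (exp (L / 4) / (\<kappa> * log 2 N - 1))
    \<le> (INF T\<in>tests P0 n. (\<integral>x. T x \<partial>PiM {..<n} (\<lambda>_. P0))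
          + (SUP \<theta>\<in>{\<theta>1..\<theta>2}. type2 P0 lam ph n T (\<Delta> \<theta>) \<theta> Mc))"
proof -
  define lo where "lo = N powr (2 - 2 * (4 * s / (4 * s + \<theta>1 + 1)))"
  define hi where "hi = N powr (2 - 2 * (4 * s / (4 * s + \<theta>2 + 1)))"
  define J where "J = {j::nat. lo \<le> 2 ^ j \<and> 2 ^ j \<le> hi}"
  have "4 * s / (4 * s + \<theta>1 + 1) < 1" using s th by (simp add: divide_simps)
  then have lo: "1 \<le> lo" unfolding lo_def using N by (intro ge_one_powr_ge_zero) auto
  have "log 2 hi - log 2 lo - 1 = \<kappa> * log 2 N - 1"
    using N by (simp add: lo_def hi_def \<kappa>_def log_powr algebra_simps)
  then have card_J: "\<kappa> * log 2 N - 1 \<le> real (card J)"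
    using card_dyadic_between_ge[OF lo, of hi] N unfolding J_def hi_def by simp
  then have "J \<noteq> {}" using many_blocks by auto
  have chi2: "(exp (Cb^2 * L) - 1) / card J \<le> exp (L / 4) / (\<kappa> * log 2 N - 1)"
  proof -
    have "Cb^2 \<le> 1/4" using Cb power_mono[of Cb "1/2" 2] by (simp add: power2_eq_square)
    then have "Cb^2 * L \<le> L / 4" using L mult_right_mono[of "Cb^2" "1/4" L] by simp
    then have "exp (Cb^2 * L) \<le> exp (L / 4)" by (simp only: exp_le_cancel_iff)
    then have "exp (Cb^2 * L) - 1 \<le> exp (L / 4)" by linarith
    moreover have "0 \<le> exp (Cb^2 * L) - 1" using L by simp
    ultimately show ?thesis using card_J many_blocks by (intro frac_le) auto
  qed
  have "1 - sqrt (exp (L / 4) / (\<kappa> * log 2 N - 1))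
      \<le> (\<integral>x. T x \<partial>PiM {..<n} (\<lambda>_. P0)) + (SUP \<theta>\<in>{\<theta>1..\<theta>2}. type2 P0 lam ph n T (\<Delta> \<theta>) \<theta> Mc)"
    if "T \<in> tests P0 n" for T
    using dyadic_sign_mixture_risk_lower_bound[OF lam cl s Mc th Bp N L n Cb(1) _ Cb(3) Delta fine coarse
        J_def[unfolded lo_def hi_def] \<open>J \<noteq> {}\<close> that] Cb(2) real_sqrt_le_mono[OF chi2]
    by linarith
  moreover have "tests P0 n \<noteq> {}" unfolding tests_def by (auto intro!: exI[of _ "\<lambda>_. 0"])
  ultimately show ?thesis by (intro cINF_greatest)
qed


lemma minimax_risk_tendsto_1:
  fixes lam :: "nat \<Rightarrow> real" and \<Delta> :: "nat \<Rightarrow> real \<Rightarrow> real"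
  assumes lam: "\<And>k. 0 < lam k" and cl: "0 < cl" "\<And>k. cl \<le> real (Suc k) powr (2 * s) * lam k"
    and s: "0 < s" and Mc: "0 < Mc" and th: "0 < \<theta>1" "\<theta>1 < \<theta>2" "\<theta>2 < 2 * s - 1"
    and Bp: "1 \<le> Bp"
    and Cb: "0 < Cb" "Cb \<le> 1/2" "ln Cb \<le> (2 / (\<theta>1 + 1)) * (ln cl / 2 - s * ln 2 - \<theta>2 * \<bar>ln Mc\<bar>)"
    and Delta: "eventually (\<lambda>n. \<forall>\<theta>\<in>{\<theta>1..\<theta>2}.
      \<Delta> n \<theta> * (real n / sqrt (ln (ln (real n)))) powr (4 * s / (4 * s + \<theta> + 1)) \<le> Cb) sequentially"
  shows "(\<lambda>n. INF T\<in>tests P0 n. (\<integral>x. T x \<partial>PiM {..<n} (\<lambda>_. P0))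
            + (SUP \<theta>\<in>{\<theta>1..\<theta>2}. type2 P0 lam ph n T (\<Delta> n \<theta>) \<theta> Mc)) \<longlonglongrightarrow> 1"
proof -
  define N where "N n = real n / sqrt (ln (ln (real n)))" for n :: nat
  define L where "L n = ln (ln (real n))" for n :: nat
  define \<alpha>1 where "\<alpha>1 = 4 * s / (4 * s + \<theta>1 + 1)"
  define \<alpha>2 where "\<alpha>2 = 4 * s / (4 * s + \<theta>2 + 1)"
  define \<kappa> where "\<kappa> = 2 * \<alpha>1 - 2 * \<alpha>2"
  define h where "h n = exp (L n / 4) / (\<kappa> * log 2 (N n) - 1)" for n
  have \<alpha>1: "\<alpha>1 < 1" unfolding \<alpha>1_def using s th by (simp add: divide_simps)
  have \<kappa>: "0 < \<kappa>" unfolding \<kappa>_def \<alpha>1_def \<alpha>2_def using s th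
    by (simp add: divide_strict_left_mono)
  have fine_exp: "2 - 3 * \<alpha>2 < 0"
    unfolding \<alpha>2_def using s th by (simp add: field_simps)
  have "eventually (\<lambda>n. 1 < N n) sequentially" "eventually (\<lambda>n. 0 < L n) sequentially"
      "eventually (\<lambda>n. 0 < \<kappa> * log 2 (N n) - 1) sequentially"
    using filterlim_n_over_sqrt_lnln filterlim_lnln filterlim_log_n_over_sqrt_lnln[OF \<kappa>]
    unfolding N_def L_def filterlim_at_top_dense by blast+
  moreover have "eventually (\<lambda>n. Cb * N n powr (2 - 3 * \<alpha>2) * Bp^2 \<le> 1) sequentially"
  proof -
    have "((\<lambda>n. (Cb * Bp^2) * N n powr (2 - 3 * \<alpha>2)) \<longlongrightarrow> (Cb * Bp^2) * 0) sequentially"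
      unfolding N_def by (intro tendsto_mult tendsto_const tendsto_n_over_sqrt_lnln_powr_neg fine_exp)
    then show ?thesis by (auto dest!: order_tendstoD(2)[where a=1] elim!: eventually_mono simp: mult_ac)
  qed
  moreover have "eventually (\<lambda>n. Cb * sqrt (L n) * N n powr (\<alpha>1 - 1) \<le> 1) sequentially"
  proof -
    have "((\<lambda>n. Cb * (sqrt (L n) * N n powr (\<alpha>1 - 1))) \<longlongrightarrow> Cb * 0) sequentially"
      unfolding N_def L_def by (intro tendsto_mult tendsto_const tendsto_sqrt_lnln_mult_powr \<alpha>1)
    then show ?thesis by (auto dest!: order_tendstoD(2)[where a=1] elim!: eventually_mono simp: mult_ac)
  qed
  ultimately have lower: "eventually (\<lambda>n. 1 - sqrt (h n) \<le> (INF T\<in>tests P0 n. (\<integral>x. T x \<partial>PiM {..<n} (\<lambda>_. P0))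
      + (SUP \<theta>\<in>{\<theta>1..\<theta>2}. type2 P0 lam ph n T (\<Delta> n \<theta>) \<theta> Mc))) sequentially"
    using Delta
  proof eventually_elim
    case (elim n)
    have n: "real n = N n * sqrt (L n)" unfolding N_def L_def using elim(2) by (simp add: L_def)
    have "\<And>\<theta>. \<theta> \<in> {\<theta>1..\<theta>2} \<Longrightarrow> \<Delta> n \<theta> * N n powr (4 * s / (4 * s + \<theta> + 1)) \<le> Cb"
      using elim(6) unfolding N_def by blast
    from minimax_risk_ge[OF lam cl s Mc th(1) _ Bp elim(1,2) n Cb this] show ?case
      using th elim(3-5) unfolding h_def \<kappa>_def \<alpha>1_def \<alpha>2_def by simp
  qed
  show ?thesis
  proof (rule tendsto_sandwich[OF lower])
    show "eventually (\<lambda>n. (INF T\<in>tests P0 n. (\<integral>x. T x \<partial>PiM {..<n} (\<lambda>_. P0))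
        + (SUP \<theta>\<in>{\<theta>1..\<theta>2}. type2 P0 lam ph n T (\<Delta> n \<theta>) \<theta> Mc)) \<le> 1) sequentially"
      using th by (intro always_eventually allI minimax_risk_le_1) auto
    have "((\<lambda>n. 1 - sqrt (h n)) \<longlongrightarrow> 1 - sqrt 0) sequentially"
      unfolding h_def L_def N_def by (intro tendsto_intros tendsto_exp_lnln_over_log \<kappa>)
    then show "((\<lambda>n. 1 - sqrt (h n)) \<longlongrightarrow> 1) sequentially" by simp
  qed simp
qed

end

text \<open>Only the decay of the eigenvalues from below and the boundedness, orthonormality and centring
  of the eigenfunctions enter the lower bound.\<close>

theorem theorem6:
  fixes P0 :: "'a measure" and K :: "'a \<Rightarrow> 'a \<Rightarrow> real"
    and lam :: "nat \<Rightarrow> real" and \<phi> :: "nat \<Rightarrow> 'a \<Rightarrow> real"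
    and s Mc \<theta>1 \<theta>2 :: real
  assumes P0: "prob_space P0"
    and K_meas: "(\<lambda>z. K (fst z) (snd z)) \<in> borel_measurable (P0 \<Otimes>\<^sub>M P0)"
    and K_sym: "\<forall>x y. K x y = K y x"
    and K_psd: "\<forall>(m::nat) (c::nat \<Rightarrow> real) (x::nat \<Rightarrow> 'a). (\<forall>i<m. x i \<in> space P0) \<longrightarrow>
                  0 \<le> (\<Sum>i<m. \<Sum>j<m. c i * c j * K (x i) (x j))"
    and K_sq: "integrable (P0 \<Otimes>\<^sub>M P0) (\<lambda>z. (K (fst z) (snd z))^2)"
    and K_degen: "AE x in P0. (\<integral>y. K x y \<partial>P0) = 0"
    and K_mercer: "AE z in P0 \<Otimes>\<^sub>M P0. K (fst z) (snd z) = (\<Sum>k. lam k * \<phi> k (fst z) * \<phi> k (snd z))"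
    and lam_pos: "\<forall>k. 0 < lam k"
    and lam_dec: "\<forall>k. lam (Suc k) < lam k"
    and lam_liminf: "0 < liminf (\<lambda>k. ereal ((real (Suc k)) powr (2 * s) * lam k))"
    and lam_limsup: "limsup (\<lambda>k. ereal ((real (Suc k)) powr (2 * s) * lam k)) < \<infinity>"
    and phi_meas: "\<forall>k. \<phi> k \<in> borel_measurable P0"
    and phi_bdd: "\<exists>B. \<forall>k. AE x in P0. \<bar>\<phi> k x\<bar> \<le> B"
    and phi_orth: "\<forall>j k. (\<integral>x. \<phi> j x * \<phi> k x \<partial>P0) = (if j = k then 1 else 0)"
    and phi_mean0: "\<forall>k. (\<integral>x. \<phi> k x \<partial>P0) = 0"
    and phi_complete: "\<forall>f \<in> L2 P0. (\<integral>x. f x \<partial>P0) = 0 \<longrightarrow> (\<forall>k. coef P0 \<phi> f k = 0) \<longrightarrow>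
                          (AE x in P0. f x = 0)"
    and s: "s > 1/2"
    and Mc: "Mc > 0"
    and th: "0 < \<theta>1" "\<theta>1 < \<theta>2" "\<theta>2 < 2 * s - 1"
  shows "\<exists>c2>0. \<forall>\<Delta> :: nat \<Rightarrow> real \<Rightarrow> real.
     limsup (\<lambda>n. SUP \<theta>\<in>{\<theta>1..\<theta>2}. ereal (\<Delta> n \<theta> *
         (real n / sqrt (ln (ln (real n)))) powr (4 * s / (4 * s + \<theta> + 1)))) \<le> ereal c2 \<longrightarrow>
     (\<lambda>n. INF T\<in>tests P0 n. (\<integral>x. T x \<partial>(PiM {..<n} (\<lambda>_. P0)))
          + (SUP \<theta>\<in>{\<theta>1..\<theta>2}. type2 P0 lam \<phi> n T (\<Delta> n \<theta>) \<theta> Mc)) \<longlonglongrightarrow> 1"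
proof -
  obtain cl where cl: "0 < cl" "\<And>k. cl \<le> real (Suc k) powr (2 * s) * lam k"
    using ge_const_if_liminf_pos[of "\<lambda>k. real (Suc k) powr (2 * s) * lam k"] lam_pos lam_liminf by auto
  obtain B where B: "\<forall>k. AE x in P0. \<bar>\<phi> k x\<bar> \<le> B" using phi_bdd by blast
  have "AE x in P0. \<bar>\<phi> k x\<bar> \<le> max B 1" for k
    using B[rule_format, of k] by eventually_elim simp
  then interpret bounded_orthonormal_system P0 \<phi> "max B 1"
    unfolding bounded_orthonormal_system_def using P0 phi_meas phi_orth phi_mean0 by blast
  define \<Lambda> where "\<Lambda> = (2 / (\<theta>1 + 1)) * (ln cl / 2 - s * ln 2 - \<theta>2 * \<bar>ln Mc\<bar>)"
  define Cb where "Cb = min (1/2) (exp \<Lambda>)"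
  have Cb: "0 < Cb" "Cb \<le> 1/2" "ln Cb \<le> \<Lambda>"
  proof -
    show "0 < Cb" "Cb \<le> 1/2" by (simp_all add: Cb_def)
    have "ln Cb \<le> ln (exp \<Lambda>)" using \<open>0 < Cb\<close> by (subst ln_le_cancel_iff) (auto simp: Cb_def)
    then show "ln Cb \<le> \<Lambda>" by simp
  qed
  show ?thesis
  proof (intro exI[of _ "Cb / 2"] conjI allI impI)
    fix \<Delta> :: "nat \<Rightarrow> real \<Rightarrow> real"
    assume "limsup (\<lambda>n. SUP \<theta>\<in>{\<theta>1..\<theta>2}. ereal (\<Delta> n \<theta> *
         (real n / sqrt (ln (ln (real n)))) powr (4 * s / (4 * s + \<theta> + 1)))) \<le> ereal (Cb / 2)"
    also have "\<dots> < ereal Cb" using Cb by simp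
    finally have "eventually (\<lambda>n. \<forall>\<theta>\<in>{\<theta>1..\<theta>2}. \<Delta> n \<theta> *
         (real n / sqrt (ln (ln (real n)))) powr (4 * s / (4 * s + \<theta> + 1)) \<le> Cb) sequentially"
      by (rule eventually_le_if_limsup_SUP_less)
    then show "(\<lambda>n. INF T\<in>tests P0 n. (\<integral>x. T x \<partial>(PiM {..<n} (\<lambda>_. P0)))
          + (SUP \<theta>\<in>{\<theta>1..\<theta>2}. type2 P0 lam \<phi> n T (\<Delta> n \<theta>) \<theta> Mc)) \<longlonglongrightarrow> 1"
      using lam_pos s by (intro minimax_risk_tendsto_1[OF _ cl _ Mc th _ Cb[unfolded \<Lambda>_def]]) auto
  qed (use Cb in simp)
qed

end
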